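(* Let $k$ be an algebraically closed field, $R$ a finitely generated commutative $k$-algebra, $M$ a Noetherian $R$-module, $x=(x_1,\ldots,x_n)$ an $n$-tuple in $R$, and $q=(q_1,\ldots,q_m)$ an $m$-tuple of polynomials in $k[X_1,\ldots,X_n]$, with $q(x)=(q_1(x),\ldots,q_m(x))$ and $q:k^n\to k^m$, $a\mapsto(q_1(a),\ldots,q_m(a))$. Then \[\sigma(q(x),M)=q(\sigma(x,M)).\]
   Context: For a commutative $k$-algebra $R$, an $R$-module $M$ and an $n$-tuple $y$ in $R$, the Koszul complex $\operatorname{Kos}(y,M)$ is $0\leftarrow M\leftarrow M\otimes_k\wedge^1k^n\leftarrow\cdots\leftarrow M\otimes_k\wedge^nk^n\leftarrow 0$ with differential $\partial(u\otimes e_{i_1}\wedge\cdots\wedge e_{i_p})=\sum_{s=1}^p(-1)^{s+1}y_{i_s}u\otimes e_{i_1}\wedge\cdots\wedge\widehat{e_{i_s}}\wedge\cdots\wedge e_{i_p}$. For $a\in k^n$, $y-a=(y_1-a_1,\ldots,y_n-a_n)$. The Taylor spectrum $\sigma(y,M)$ is the set of $a\in k^n$ such that $\operatorname{Kos}(y-a,M)$ is not exact. *)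

theory Defs
  imports "HOL-Computational_Algebra.Polynomial" "HOL-Library.Poly_Mapping"
begin

definition alg_map :: "('k::field \<Rightarrow> 'r::comm_ring_1) \<Rightarrow> bool" where
  "alg_map \<phi> \<longleftrightarrow> \<phi> 1 = 1 \<and> (\<forall>a b. \<phi> (a + b) = \<phi> a + \<phi> b) \<and> (\<forall>a b. \<phi> (a * b) = \<phi> a * \<phi> b)"

inductive_set subalg_gen :: "('k \<Rightarrow> 'r::comm_ring_1) \<Rightarrow> 'r set \<Rightarrow> 'r set"
  for \<phi> S where
  const: "\<phi> c \<in> subalg_gen \<phi> S"
| gen: "s \<in> S \<Longrightarrow> s \<in> subalg_gen \<phi> S"
| add: "a \<in> subalg_gen \<phi> S \<Longrightarrow> b \<in> subalg_gen \<phi> S \<Longrightarrow> a + b \<in> subalg_gen \<phi> S"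
| mult: "a \<in> subalg_gen \<phi> S \<Longrightarrow> b \<in> subalg_gen \<phi> S \<Longrightarrow> a * b \<in> subalg_gen \<phi> S"

definition fin_gen_algebra :: "('k \<Rightarrow> 'r::comm_ring_1) \<Rightarrow> bool" where
  "fin_gen_algebra \<phi> \<longleftrightarrow> (\<exists>S. finite S \<and> subalg_gen \<phi> S = UNIV)"

definition noetherian_module :: "('r::comm_ring_1 \<Rightarrow> 'm::ab_group_add \<Rightarrow> 'm) \<Rightarrow> bool" where
  "noetherian_module smul \<longleftrightarrow>
     (\<forall>N. module.subspace smul N \<longrightarrow> (\<exists>F. finite F \<and> F \<subseteq> N \<and> module.span smul F = N))"

(* polynomials in k[X_0, X_1, ...]: monomials are exponent vectors nat =>0 nat *)
type_synonym 'k mpoly = "(nat \<Rightarrow>\<^sub>0 nat) \<Rightarrow>\<^sub>0 'k"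

definition mpoly_vars :: "'k::zero mpoly \<Rightarrow> nat set" where
  "mpoly_vars p = \<Union> (Poly_Mapping.keys ` Poly_Mapping.keys p)"

(* evaluation of p at the tuple x (variable X_i |-> x ! i), coefficients mapped by phi *)
definition mpoly_eval :: "('k::zero \<Rightarrow> 'r::comm_ring_1) \<Rightarrow> 'r list \<Rightarrow> 'k mpoly \<Rightarrow> 'r" where
  "mpoly_eval \<phi> x p = (\<Sum>mon\<in>Poly_Mapping.keys p. \<phi> (Poly_Mapping.lookup p mon) * (\<Prod>i\<in>Poly_Mapping.keys mon. (x ! i) ^ Poly_Mapping.lookup mon i))"

(* Koszul complex Kos(y,M), n = length y.  M \<otimes> \<wedge>^p k^n is identified with functions
   from the p-element subsets I of {0..<n} to M (coefficient of e_I), extended by 0. *)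
definition kos_chains :: "nat \<Rightarrow> nat \<Rightarrow> (nat set \<Rightarrow> 'm::zero) set" where
  "kos_chains n p = {c. \<forall>I. \<not> (I \<subseteq> {..<n} \<and> card I = p) \<longrightarrow> c I = 0}"

(* d(u e_{i_1}\<and>...\<and>e_{i_p}) = \<Sum>_s (-1)^(s+1) y_{i_s} u e_I\{i_s}; the coefficient at J
   collects the terms from I = J \<union> {i}, i \<notin> J, with s - 1 = #{j\<in>J. j < i}. *)
definition kos_d :: "('r::comm_ring_1 \<Rightarrow> 'm::ab_group_add \<Rightarrow> 'm) \<Rightarrow> 'r list \<Rightarrow>
    (nat set \<Rightarrow> 'm) \<Rightarrow> (nat set \<Rightarrow> 'm)" where
  "kos_d smul y c J =
     (if J \<subseteq> {..<length y} then
        (\<Sum>i\<in>{..<length y} - J. smul ((-1) ^ card {j\<in>J. j < i} * y ! i) (c (insert i J)))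
      else 0)"

(* exactness at every degree p = 0..n (the differential out of degree 0 is the zero map,
   and kos_d vanishes on 0-chains, so the uniform condition is correct at p = 0;
   kos_chains n (n+1) = {0}, which gives injectivity at degree n) *)
definition kos_exact :: "('r::comm_ring_1 \<Rightarrow> 'm::ab_group_add \<Rightarrow> 'm) \<Rightarrow> 'r list \<Rightarrow> bool" where
  "kos_exact smul y \<longleftrightarrow>
     (\<forall>p\<le>length y. \<forall>c\<in>kos_chains (length y) p. kos_d smul y c = (\<lambda>_. 0) \<longrightarrow>
        (\<exists>e\<in>kos_chains (length y) (Suc p). kos_d smul y e = c))"

definition taylor_spectrum :: "('k \<Rightarrow> 'r::comm_ring_1) \<Rightarrow> ('r \<Rightarrow> 'm::ab_group_add \<Rightarrow> 'm) \<Rightarrow>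
    'r list \<Rightarrow> 'k list set" where
  "taylor_spectrum \<phi> smul y =
     {a. length a = length y \<and> \<not> kos_exact smul (map2 (\<lambda>yi ai. yi - \<phi> ai) y a)}"

end

(* Over a finitely generated module M, Nakayama's lemma and the null-homotopies
   d h_i + h_i d = y_i of the Koszul complex show that Kos(y, M) is exact iff
   y_1 M + ... + y_n M = M.  If this fails, a maximal proper submodule P containing yM
   exists, and the annihilator m of M/P is a maximal ideal containing every y_i with
   m M <> M; conversely such an m prevents yM = M.  So a lies in sigma(y, M) iff all
   y_i - a_i lie in a maximal ideal m with m M <> M.  By the weak Nullstellensatz,
   derived from Zariski's lemma, every maximal ideal m of R satisfies x = a (mod m) for
   a unique point a of k^n, and then q(x) = q(a) (mod m). *)

theory Submission
  imports Defs "HOL-Algebra.Finite_Extensions" "HOL-Algebra.QuotRing" "HOL-Algebra.Generated_Fields"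
    "HOL-Decision_Procs.Algebra_Aux"
begin

hide_const (open) Module.module

section \<open>Ideals of a commutative ring\<close>

text \<open>A type-class ring is viewed as the HOL-Algebra ring \<^const>\<open>cring_class_ops\<close>, so that
  \<^const>\<open>ideal\<close> and \<^const>\<open>maximalideal\<close> apply to it.\<close>

lemma class_idealI:
  fixes I :: "'r::comm_ring_1 set"
  assumes "0 \<in> I" "\<And>a b. a \<in> I \<Longrightarrow> b \<in> I \<Longrightarrow> a + b \<in> I" "\<And>a r. a \<in> I \<Longrightarrow> r * a \<in> I"
  shows "ideal I cring_class_ops"
proof (rule idealI[OF cring_class.ring_axioms])
  have "a \<in> I \<Longrightarrow> - a \<in> I" for a using assms(3)[of a "- 1"] by simp
  then show "subgroup I (add_monoid cring_class_ops)"
    using cring_class.add.subgroupI[of I] assms by (auto simp: cring_class_ops_def)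
qed (use assms in \<open>auto simp: class_simps mult.commute\<close>)

context
  fixes I :: "'r::comm_ring_1 set"
  assumes I: "ideal I cring_class_ops"
begin

lemma class_ideal_zero: "0 \<in> I"
  using additive_subgroup.zero_closed[OF ideal.axioms(1)[OF I]] by (simp add: class_simps)

lemma class_ideal_add: "a \<in> I \<Longrightarrow> b \<in> I \<Longrightarrow> a + b \<in> I"
  using additive_subgroup.a_closed[OF ideal.axioms(1)[OF I]] by (simp add: class_simps)

lemma class_ideal_mult: "a \<in> I \<Longrightarrow> r * a \<in> I"
  using ideal.I_l_closed[OF I] by (simp add: class_simps)

lemma class_ideal_diff: "a \<in> I \<Longrightarrow> b \<in> I \<Longrightarrow> a - b \<in> I"
  using class_ideal_add class_ideal_mult[of b "- 1"] by (metis diff_conv_add_uminus mult_minus1)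

lemma class_ideal_sum_diff:
  assumes "\<And>i. i \<in> A \<Longrightarrow> f i - g i \<in> I"
  shows "sum f A - sum g A \<in> I"
  using assms
proof (induction A rule: infinite_finite_induct)
  case (insert a A)
  have "sum f (insert a A) - sum g (insert a A) = (f a - g a) + (sum f A - sum g A)"
    using insert by (simp add: algebra_simps)
  also have "\<dots> \<in> I" using insert by (auto intro: class_ideal_add)
  finally show ?case .
qed (simp_all add: class_ideal_zero)

lemma class_ideal_prod_diff:
  assumes "\<And>i. i \<in> A \<Longrightarrow> f i - g i \<in> I"
  shows "prod f A - prod g A \<in> I"
  using assms
proof (induction A rule: infinite_finite_induct)
  case (insert a A)
  have "prod f (insert a A) - prod g (insert a A) = f a * (prod f A - prod g A) + prod g A * (f a - g a)"
    using insert by (simp add: algebra_simps)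
  also have "\<dots> \<in> I" using insert by (auto intro: class_ideal_add class_ideal_mult)
  finally show ?case .
qed (simp_all add: class_ideal_zero)

lemma class_ideal_power_diff: "a - b \<in> I \<Longrightarrow> a ^ n - b ^ n \<in> I"
  using class_ideal_prod_diff[of "{..<n}" "\<lambda>_. a" "\<lambda>_. b"] by simp

end

lemma class_maximalidealI:
  fixes m :: "'r::comm_ring_1 set"
  assumes m: "ideal m cring_class_ops" and one: "1 \<notin> m"
    and inv: "\<And>r. r \<notin> m \<Longrightarrow> \<exists>s. 1 - s * r \<in> m"
  shows "maximalideal m cring_class_ops"
proof (rule maximalidealI[OF m])
  show "carrier cring_class_ops \<noteq> m" using one by (auto simp: class_simps)
next
  fix J assume J: "ideal J cring_class_ops" "m \<subseteq> J"
  show "J = m \<or> J = carrier cring_class_ops"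
  proof (cases "J = m")
    case False
    then obtain r s where "r \<in> J" "1 - s * r \<in> m" using J(2) inv by blast
    then have "(1 - s * r) + s * r \<in> J"
      using J class_ideal_add[OF J(1)] class_ideal_mult[OF J(1)] by blast
    then have "1 \<in> J" by simp
    then show ?thesis using ideal.one_imp_carrier[OF J(1)] by (simp add: class_simps)
  qed simp
qed

lemma class_maximalideal_one: "maximalideal m cring_class_ops \<Longrightarrow> (1::'r::comm_ring_1) \<notin> m"
  using maximalideal.I_notcarr ideal.one_imp_carrier maximalideal.axioms(1)
  by (fastforce simp: class_simps)

lemma alg_map_simps:
  assumes "alg_map \<phi>"
  shows "\<phi> 0 = 0" "\<phi> 1 = 1" "\<phi> (a + b) = \<phi> a + \<phi> b" "\<phi> (a * b) = \<phi> a * \<phi> b"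
    and "\<phi> (a - b) = \<phi> a - \<phi> b"
proof -
  have add: "\<phi> (a + b) = \<phi> a + \<phi> b" for a b using assms unfolding alg_map_def by blast
  show "\<phi> 0 = 0" using add[of 0 0] by simp
  show "\<phi> (a - b) = \<phi> a - \<phi> b" using add[of "a - b" b] by (simp add: eq_diff_eq)
qed (use assms in \<open>auto simp: alg_map_def\<close>)

lemma alg_map_sum: "alg_map \<phi> \<Longrightarrow> \<phi> (sum f A) = (\<Sum>x\<in>A. \<phi> (f x))"
  by (induction A rule: infinite_finite_induct) (auto simp: alg_map_simps)

lemma alg_map_prod: "alg_map \<phi> \<Longrightarrow> \<phi> (prod f A) = (\<Prod>x\<in>A. \<phi> (f x))"
  by (induction A rule: infinite_finite_induct) (auto simp: alg_map_simps)

lemma alg_map_power: "alg_map \<phi> \<Longrightarrow> \<phi> (a ^ n) = \<phi> a ^ n"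
  by (induction n) (auto simp: alg_map_simps)

lemma alg_map_eq_mod_maximalideal:
  fixes \<phi> :: "'k::field \<Rightarrow> 'r::comm_ring_1"
  assumes \<phi>: "alg_map \<phi>" and m: "maximalideal m cring_class_ops" and cd: "\<phi> c - \<phi> d \<in> m"
  shows "c = d"
proof (rule ccontr)
  assume "c \<noteq> d"
  then have "\<phi> (inverse (c - d)) * (\<phi> c - \<phi> d) = 1"
    using \<phi> by (simp flip: alg_map_simps)
  moreover have "\<phi> (inverse (c - d)) * (\<phi> c - \<phi> d) \<in> m"
    using class_ideal_mult[OF maximalideal.axioms(1)[OF m] cd] .
  ultimately show False using class_maximalideal_one[OF m] by simp
qed

lemma mpoly_eval_diff_in_ideal:
  fixes \<phi> :: "'k::field \<Rightarrow> 'r::comm_ring_1"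
  assumes \<phi>: "alg_map \<phi>" and I: "ideal I cring_class_ops"
    and vars: "mpoly_vars p \<subseteq> {..<length x}"
    and xa: "\<And>i. i < length x \<Longrightarrow> x ! i - \<phi> (a ! i) \<in> I"
  shows "mpoly_eval \<phi> x p - \<phi> (mpoly_eval (\<lambda>c. c) a p) \<in> I"
proof -
  have "\<phi> (mpoly_eval (\<lambda>c. c) a p)
      = (\<Sum>mon\<in>Poly_Mapping.keys p. \<phi> (Poly_Mapping.lookup p mon) *
           (\<Prod>i\<in>Poly_Mapping.keys mon. \<phi> (a ! i) ^ Poly_Mapping.lookup mon i))"
    unfolding mpoly_eval_def using \<phi> by (simp add: alg_map_sum alg_map_prod alg_map_power alg_map_simps)
  moreover have "mpoly_eval \<phi> x p - \<dots> \<in> I"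
    unfolding mpoly_eval_def
  proof (rule class_ideal_sum_diff[OF I])
    fix mon assume mon: "mon \<in> Poly_Mapping.keys p"
    have "(\<Prod>i\<in>Poly_Mapping.keys mon. x ! i ^ Poly_Mapping.lookup mon i)
        - (\<Prod>i\<in>Poly_Mapping.keys mon. \<phi> (a ! i) ^ Poly_Mapping.lookup mon i) \<in> I"
    proof (rule class_ideal_prod_diff[OF I])
      fix i assume "i \<in> Poly_Mapping.keys mon"
      then have "i < length x" using vars mon unfolding mpoly_vars_def by auto
      then show "x ! i ^ Poly_Mapping.lookup mon i - \<phi> (a ! i) ^ Poly_Mapping.lookup mon i \<in> I"
        using class_ideal_power_diff[OF I xa] by blast
    qed
    then show "\<phi> (Poly_Mapping.lookup p mon) * (\<Prod>i\<in>Poly_Mapping.keys mon. x ! i ^ Poly_Mapping.lookup mon i)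
        - \<phi> (Poly_Mapping.lookup p mon) * (\<Prod>i\<in>Poly_Mapping.keys mon. \<phi> (a ! i) ^ Poly_Mapping.lookup mon i) \<in> I"
      using class_ideal_mult[OF I] by (metis right_diff_distrib)
  qed
  ultimately show ?thesis by simp
qed

section \<open>Submodules of the form I M\<close>

context Modules.module
begin

definition tuple_smul :: "'a list \<Rightarrow> 'b set" where
  "tuple_smul y = range (\<lambda>w. \<Sum>i<length y. scale (y ! i) (w i))"

definition ideal_smul :: "'a set \<Rightarrow> 'b set" where
  "ideal_smul I = span {scale r v | r v. r \<in> I}"

end

context Modules.module
begin

lemma tuple_smul_memI: "u = (\<Sum>i<length y. scale (y!i) (w i)) \<Longrightarrow> u \<in> tuple_smul y"
  unfolding tuple_smul_def using rangeI[of "\<lambda>w. \<Sum>i<length y. scale (y!i) (w i)" w] by simp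

lemma subspace_tuple_smul: "subspace (tuple_smul y)"
proof (rule subspaceI)
  show "0 \<in> tuple_smul y" by (rule tuple_smul_memI[where w = "\<lambda>_. 0"]) simp
next
  fix u v assume "u \<in> tuple_smul y" "v \<in> tuple_smul y"
  then obtain w w' where "u = (\<Sum>i<length y. scale (y!i) (w i))" "v = (\<Sum>i<length y. scale (y!i) (w' i))"
    unfolding tuple_smul_def by blast
  then have "u + v = (\<Sum>i<length y. scale (y!i) (w i + w' i))"
    by (simp add: sum.distrib scale_right_distrib)
  then show "u + v \<in> tuple_smul y" by (rule tuple_smul_memI)
next
  fix c u assume "u \<in> tuple_smul y"
  then obtain w where "u = (\<Sum>i<length y. scale (y!i) (w i))" unfolding tuple_smul_def by blast
  then have "scale c u = (\<Sum>i<length y. scale (y!i) (scale c (w i)))"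
    by (simp add: scale_sum_right mult.commute)
  then show "scale c u \<in> tuple_smul y" by (rule tuple_smul_memI)
qed

lemma tuple_smul_subset_ideal_smul:
  assumes "set y \<subseteq> I"
  shows "tuple_smul y \<subseteq> ideal_smul I"
proof
  fix u assume "u \<in> tuple_smul y"
  then obtain w where u: "u = (\<Sum>i<length y. scale (y!i) (w i))" unfolding tuple_smul_def by blast
  have "scale (y!i) (w i) \<in> ideal_smul I" if "i < length y" for i
    unfolding ideal_smul_def using assms that nth_mem by (blast intro: span_base)
  then show "u \<in> ideal_smul I" unfolding u ideal_smul_def by (auto intro: span_sum)
qed

lemma scale_in_span_if_generators:
  assumes "finite F" "span F = UNIV" "\<And>v. v \<in> F \<Longrightarrow> scale r v \<in> span T"
  shows "scale r u \<in> span T"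
proof -
  have "u \<in> span F" using assms(2) by simp
  then obtain c where u: "u = (\<Sum>v\<in>F. scale (c v) v)" using span_finite[OF assms(1)] by auto
  have "scale r u = (\<Sum>v\<in>F. scale (c v) (scale r v))"
    unfolding u by (simp add: scale_sum_right mult.commute)
  also have "\<dots> \<in> span T" by (intro span_sum span_scale assms(3))
  finally show ?thesis .
qed

lemma nakayama_drop_generator:
  assumes fg: "finite F" "span F = UNIV" and y: "tuple_smul y = UNIV"
    and b: "\<And>v. v \<in> F \<Longrightarrow> scale (1 - (\<Sum>i<length y. y!i * b i)) v \<in> span (insert g Z)"
  shows "\<exists>b'. \<forall>v\<in>F. scale (1 - (\<Sum>i<length y. y!i * b' i)) v \<in> span Z"
proof -
  let ?n = "length y"
  define A where "A = (\<Sum>i<?n. y!i * b i)"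
  define r where "r = 1 - A"
  have r_span: "\<And>u. scale r u \<in> span (insert g Z)"
    using scale_in_span_if_generators[OF fg] b unfolding r_def A_def by blast
  obtain w where w: "g = (\<Sum>i<?n. scale (y!i) (w i))" using y unfolding tuple_smul_def by blast
  have "\<forall>i. \<exists>d. scale r (w i) - scale d g \<in> span Z" using r_span span_breakdown_eq by blast
  then obtain d where d: "\<And>i. scale r (w i) - scale (d i) g \<in> span Z" by metis
  define \<alpha> where "\<alpha> = (\<Sum>i<?n. y!i * d i)"
  have "scale r g = (\<Sum>i<?n. scale (y!i) (scale r (w i)))"
    by (subst w) (simp add: scale_sum_right mult.commute)
  also have "\<dots> = (\<Sum>i<?n. scale (y!i) (scale r (w i) - scale (d i) g) + scale (y!i * d i) g)"
    by (simp add: scale_right_diff_distrib)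
  also have "\<dots> = (\<Sum>i<?n. scale (y!i) (scale r (w i) - scale (d i) g)) + scale \<alpha> g"
    unfolding \<alpha>_def by (simp add: sum.distrib scale_sum_left)
  finally have "scale r g = (\<Sum>i<?n. scale (y!i) (scale r (w i) - scale (d i) g)) + scale \<alpha> g" .
  then have rg: "scale (r - \<alpha>) g \<in> span Z"
    using d by (auto simp: scale_left_diff_distrib intro!: span_sum span_scale)
  define b' where "b' = (\<lambda>i. b i + (b i + d i) * r)"
  have "(\<Sum>i<?n. y!i * b' i) = A + (A + \<alpha>) * r"
    unfolding b'_def A_def \<alpha>_def by (simp add: algebra_simps sum.distrib sum_distrib_left)
  then have b': "1 - (\<Sum>i<?n. y!i * b' i) = (r - \<alpha>) * r"
    unfolding r_def by (simp add: algebra_simps)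
  show ?thesis
  proof (intro exI[of _ b'] ballI)
    fix v assume "v \<in> F"
    obtain k where k: "scale r v - scale k g \<in> span Z" using r_span span_breakdown_eq by blast
    have "scale (1 - (\<Sum>i<?n. y!i * b' i)) v = scale (r - \<alpha>) (scale r v - scale k g) + scale k (scale (r - \<alpha>) g)"
      unfolding b' by (simp add: scale_right_diff_distrib mult.commute)
    also have "\<dots> \<in> span Z" using span_add[OF span_scale[OF k] span_scale[OF rg]] .
    finally show "scale (1 - (\<Sum>i<?n. y!i * b' i)) v \<in> span Z" .
  qed
qed

lemma nakayama_drop_generators:
  assumes fg: "finite F" "span F = UNIV" and y: "tuple_smul y = UNIV"
    and W: "finite W" "W \<subseteq> F"
  shows "\<exists>b. \<forall>v\<in>F. scale (1 - (\<Sum>i<length y. y!i * b i)) v \<in> span (F - W)"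
  using W
proof (induction W rule: finite_induct)
  case empty
  show ?case by (rule exI[of _ "\<lambda>_. 0"]) (simp add: span_base)
next
  case (insert g W)
  then obtain b where b: "\<forall>v\<in>F. scale (1 - (\<Sum>i<length y. y!i * b i)) v \<in> span (F - W)"
    by auto
  have "span (F - W) = span (insert g (F - insert g W))"
    using insert by (intro arg_cong[of _ _ span]) auto
  with b have "\<And>v. v \<in> F \<Longrightarrow> scale (1 - (\<Sum>i<length y. y!i * b i)) v \<in> span (insert g (F - insert g W))"
    by (simp only:)
  then show ?case by (rule nakayama_drop_generator[OF fg y])
qed

lemma nakayama_tuple_smul:
  assumes fg: "finite F" "span F = UNIV" and y: "tuple_smul y = UNIV"
  obtains b where "\<And>u. scale (1 - (\<Sum>i<length y. y!i * b i)) u = 0"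
proof -
  obtain b where b: "\<forall>v\<in>F. scale (1 - (\<Sum>i<length y. y!i * b i)) v \<in> span (F - F)"
    using nakayama_drop_generators[OF fg y fg(1) order_refl] by blast
  have "scale (1 - (\<Sum>i<length y. y!i * b i)) u \<in> span {}" for u
    by (rule scale_in_span_if_generators[OF fg]) (use b in simp)
  then show ?thesis by (intro that) simp
qed

lemma exists_maximal_submodule:
  assumes fg: "finite F" "span F = UNIV" and N: "subspace N" "N \<noteq> UNIV"
  obtains P where "subspace P" "N \<subseteq> P" "P \<noteq> UNIV"
    "\<And>Q. subspace Q \<Longrightarrow> P \<subseteq> Q \<Longrightarrow> Q \<noteq> UNIV \<Longrightarrow> Q = P"
proof -
  define Ps where "Ps = {P. subspace P \<and> N \<subseteq> P \<and> P \<noteq> UNIV}"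
  have "\<exists>P\<in>Ps. \<forall>Q\<in>Ps. P \<subseteq> Q \<longrightarrow> Q = P"
  proof (rule subset_Zorn_nonempty)
    show "Ps \<noteq> {}" using N unfolding Ps_def by blast
  next
    fix Cs assume C: "Cs \<noteq> {}" "subset.chain Ps Cs"
    have CPs: "Cs \<subseteq> Ps" using C(2) unfolding subset_chain_def by blast
    then have sub: "\<And>Q. Q \<in> Cs \<Longrightarrow> subspace Q" unfolding Ps_def by blast
    have "subspace (\<Union>Cs)"
    proof (rule subspaceI)
      obtain Q where "Q \<in> Cs" using C(1) by blast
      then show "0 \<in> \<Union>Cs" using sub subspace_0 by blast
    next
      fix x y assume "x \<in> \<Union>Cs" "y \<in> \<Union>Cs"
      then obtain A B where "A \<in> Cs" "B \<in> Cs" "x \<in> A" "y \<in> B" by blast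
      moreover have "A \<subseteq> B \<or> B \<subseteq> A" using C(2) \<open>A \<in> Cs\<close> \<open>B \<in> Cs\<close> unfolding subset_chain_def by blast
      ultimately show "x + y \<in> \<Union>Cs" using sub subspace_add by (metis UnionI subsetD)
    next
      fix c x assume "x \<in> \<Union>Cs"
      then show "scale c x \<in> \<Union>Cs" using sub subspace_scale by blast
    qed
    moreover have "\<Union>Cs \<noteq> UNIV"
    proof
      assume "\<Union>Cs = UNIV"
      then obtain B where "B \<in> Cs" "F \<subseteq> B"
        using finite_subset_Union_chain[OF fg(1) _ C] by blast
      then have "span F \<subseteq> B" using span_minimal sub by blast
      moreover have "B \<noteq> UNIV" using \<open>B \<in> Cs\<close> CPs unfolding Ps_def by blast
      ultimately show False using fg(2) by auto
    qed
    moreover have "N \<subseteq> \<Union>Cs" using C(1) CPs unfolding Ps_def by blast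
    ultimately show "\<Union>Cs \<in> Ps" unfolding Ps_def by blast
  qed
  then obtain P where "P \<in> Ps" "\<And>Q. Q \<in> Ps \<Longrightarrow> P \<subseteq> Q \<Longrightarrow> Q = P" by blast
  then show ?thesis by (intro that) (auto simp: Ps_def)
qed

lemma maximal_submodule_add_line:
  assumes P: "subspace P" and Pmax: "\<And>Q. subspace Q \<Longrightarrow> P \<subseteq> Q \<Longrightarrow> Q \<noteq> UNIV \<Longrightarrow> Q = P"
    and w: "w \<notin> P"
  obtains p s where "p \<in> P" "v = p + scale s w"
proof -
  define Q where "Q = {p + scale s w | p s. p \<in> P}"
  have "subspace Q" unfolding Q_def
  proof (rule subspaceI)
    show "0 \<in> {p + scale s w |p s. p \<in> P}"
      by (intro CollectI exI[of _ 0]) (simp add: subspace_0[OF P])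
  next
    fix x y assume "x \<in> {p + scale s w |p s. p \<in> P}" "y \<in> {p + scale s w |p s. p \<in> P}"
    then obtain p s p' s' where "x = p + scale s w" "y = p' + scale s' w" "p \<in> P" "p' \<in> P" by blast
    moreover have "x + y = (p + p') + scale (s + s') w" using calculation by (simp add: scale_left_distrib)
    ultimately show "x + y \<in> {p + scale s w |p s. p \<in> P}" using subspace_add[OF P] by blast
  next
    fix c x assume "x \<in> {p + scale s w |p s. p \<in> P}"
    then obtain p s where "x = p + scale s w" "p \<in> P" by blast
    moreover have "scale c x = scale c p + scale (c * s) w" using calculation by (simp add: scale_right_distrib)
    ultimately show "scale c x \<in> {p + scale s w |p s. p \<in> P}" using subspace_scale[OF P] by blast
  qed
  moreover have "P \<subseteq> Q"
  proof
    fix p assume "p \<in> P"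
    then show "p \<in> Q" unfolding Q_def by (intro CollectI exI[of _ p] exI[of _ 0]) simp
  qed
  moreover have "w \<in> Q"
    unfolding Q_def by (intro CollectI exI[of _ 0] exI[of _ 1]) (simp add: subspace_0[OF P])
  ultimately have "Q = UNIV" using Pmax w by blast
  then show ?thesis using that unfolding Q_def by blast
qed

lemma maximal_submodule_annihilator:
  assumes P: "subspace P" and Pmax: "\<And>Q. subspace Q \<Longrightarrow> P \<subseteq> Q \<Longrightarrow> Q \<noteq> UNIV \<Longrightarrow> Q = P"
    and u: "u \<notin> P"
  shows "maximalideal {r. scale r u \<in> P} cring_class_ops" "ideal_smul {r. scale r u \<in> P} \<subseteq> P"
proof -
  let ?m = "{r. scale r u \<in> P}"
  have m: "ideal ?m cring_class_ops"
    by (rule class_idealI) (auto simp: subspace_0[OF P] scale_left_distrib subspace_add[OF P]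
        simp flip: scale_scale intro: subspace_scale[OF P])
  show "maximalideal ?m cring_class_ops"
  proof (rule class_maximalidealI[OF m])
    show "1 \<notin> ?m" using u by simp
  next
    fix r assume "r \<notin> ?m"
    then obtain p s where "p \<in> P" "u = p + scale s (scale r u)"
      using maximal_submodule_add_line[OF P Pmax] by blast
    then have "scale (1 - s * r) u = p" by (simp add: scale_left_diff_distrib algebra_simps)
    then show "\<exists>s. 1 - s * r \<in> ?m" using \<open>p \<in> P\<close> by auto
  qed
  have "scale r v \<in> P" if "r \<in> ?m" for r v
  proof -
    obtain p s where "p \<in> P" "v = p + scale s u" using maximal_submodule_add_line[OF P Pmax u] by blast
    then have "scale r v = scale r p + scale s (scale r u)" by (simp add: scale_right_distrib mult.commute)
    moreover have "scale r p \<in> P" "scale s (scale r u) \<in> P"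
      using \<open>p \<in> P\<close> that subspace_scale[OF P] by (auto simp del: scale_scale)
    ultimately show ?thesis using subspace_add[OF P] by metis
  qed
  then show "ideal_smul ?m \<subseteq> P" unfolding ideal_smul_def by (intro span_minimal P) blast
qed

lemma tuple_smul_ne_UNIV_iff:
  assumes fg: "finite F" "span F = UNIV"
  shows "tuple_smul y \<noteq> UNIV \<longleftrightarrow>
    (\<exists>m. maximalideal m cring_class_ops \<and> set y \<subseteq> m \<and> ideal_smul m \<noteq> UNIV)"
proof
  assume "tuple_smul y \<noteq> UNIV"
  then obtain P where P: "subspace P" "tuple_smul y \<subseteq> P" "P \<noteq> UNIV"
    "\<And>Q. subspace Q \<Longrightarrow> P \<subseteq> Q \<Longrightarrow> Q \<noteq> UNIV \<Longrightarrow> Q = P"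
    using exists_maximal_submodule[OF fg subspace_tuple_smul] by blast
  then obtain u where u: "u \<notin> P" by blast
  define m where "m = {r. scale r u \<in> P}"
  have "set y \<subseteq> m"
  proof
    fix r assume "r \<in> set y"
    then obtain j where j: "j < length y" "y ! j = r" by (auto simp: in_set_conv_nth)
    have "(\<Sum>i<length y. scale (y!i) (if i = j then u else 0)) = scale r u"
      using j by (simp add: if_distrib[of "scale _"] cong: if_cong)
    then have "scale r u \<in> tuple_smul y" by (intro tuple_smul_memI) (rule sym)
    then show "r \<in> m" using P(2) unfolding m_def by blast
  qed
  then show "\<exists>m. maximalideal m cring_class_ops \<and> set y \<subseteq> m \<and> ideal_smul m \<noteq> UNIV"
    using maximal_submodule_annihilator[OF P(1) P(4) u] P(3) unfolding m_def by blast
next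
  assume "\<exists>m. maximalideal m cring_class_ops \<and> set y \<subseteq> m \<and> ideal_smul m \<noteq> UNIV"
  then show "tuple_smul y \<noteq> UNIV" using tuple_smul_subset_ideal_smul by blast
qed

end

section \<open>Koszul complex\<close>

text \<open>Exterior multiplication by \<open>e\<^sub>i\<close> on Koszul chains.\<close>

definition kos_h :: "('r::comm_ring_1 \<Rightarrow> 'm::ab_group_add \<Rightarrow> 'm) \<Rightarrow> nat \<Rightarrow> nat \<Rightarrow> (nat set \<Rightarrow> 'm) \<Rightarrow> nat set \<Rightarrow> 'm" where
  "kos_h smul n i c K = (if i \<in> K \<and> K \<subseteq> {..<n} then smul ((-1) ^ card {j \<in> K - {i}. j < i}) (c (K - {i})) else 0)"

lemma koszul_sign_cancel:
  fixes J :: "nat set"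
  assumes fin: "finite J" and iJ: "i \<in> J" and kJ: "k \<notin> J"
  shows "(-1::'a::comm_ring_1) ^ card {j \<in> J. j < k} * (-1) ^ card {j \<in> insert k (J - {i}). j < i}
       + (-1) ^ card {j \<in> J - {i}. j < i} * (-1) ^ card {j \<in> J - {i}. j < k} = 0"
proof -
  define a where "a = card {j \<in> J - {i}. j < k}"
  define b where "b = card {j \<in> J - {i}. j < i}"
  have ik: "i \<noteq> k" using iJ kJ by auto
  have f1: "finite {j \<in> J - {i}. j < k}" "finite {j \<in> J - {i}. j < i}" using fin by auto
  have e1: "{j \<in> J. j < k} = (if i < k then insert i {j \<in> J - {i}. j < k} else {j \<in> J - {i}. j < k})"
    using iJ by auto
  have c1: "card {j \<in> J. j < k} = (if i < k then Suc a else a)"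
    unfolding e1 a_def using f1 by auto
  have e2: "{j \<in> insert k (J - {i}). j < i} = (if k < i then insert k {j \<in> J - {i}. j < i} else {j \<in> J - {i}. j < i})"
    by auto
  have c2: "card {j \<in> insert k (J - {i}). j < i} = (if k < i then Suc b else b)"
    unfolding e2 b_def using f1 kJ by auto
  show ?thesis
    unfolding c1 c2 a_def[symmetric] b_def[symmetric] using ik
    by (cases "i < k") (auto simp: power_add[symmetric] algebra_simps)
qed

context Modules.module
begin

lemma kos_homotopy_not_mem:
  assumes i: "i < length y" and Jn: "J \<subseteq> {..<length y}" and iJ: "i \<notin> J"
  shows "kos_d scale y (kos_h scale (length y) i c) J + kos_h scale (length y) i (kos_d scale y c) J
         = scale (y!i) (c J)"
proof -
  let ?n = "length y"
  let ?s = "\<lambda>A k. (-1::'a) ^ card {j \<in> A. j < k}"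
  have h2: "kos_h scale ?n i (kos_d scale y c) J = 0" unfolding kos_h_def using iJ by auto
  have "kos_d scale y (kos_h scale ?n i c) J
      = (\<Sum>k\<in>{..<?n} - J. scale (?s J k * y!k) (kos_h scale ?n i c (insert k J)))"
    unfolding kos_d_def using Jn by simp
  also have "\<dots> = (\<Sum>k\<in>{..<?n} - J. if k = i then scale (?s J i * y!i) (scale (?s J i) (c J)) else 0)"
  proof (rule sum.cong[OF refl])
    fix k assume k: "k \<in> {..<?n} - J"
    show "scale (?s J k * y!k) (kos_h scale ?n i c (insert k J))
        = (if k = i then scale (?s J i * y!i) (scale (?s J i) (c J)) else 0)"
    proof (cases "k = i")
      case True
      have "insert i J - {i} = J" using iJ by auto
      thus ?thesis unfolding kos_h_def using True k Jn by auto
    next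
      case ki: False
      hence "i \<notin> insert k J" using iJ by auto
      thus ?thesis unfolding kos_h_def using ki by auto
    qed
  qed
  also have "\<dots> = scale (?s J i * y!i) (scale (?s J i) (c J))"
    using i iJ by simp
  also have "\<dots> = scale (y!i) (c J)"
    by (simp add: algebra_simps power_add[symmetric] flip: power_add mult.assoc)
  finally show ?thesis using h2 by simp
qed

lemma kos_homotopy_mem:
  assumes i: "i < length y" and Jn: "J \<subseteq> {..<length y}" and iJ: "i \<in> J"
  shows "kos_d scale y (kos_h scale (length y) i c) J + kos_h scale (length y) i (kos_d scale y c) J
         = scale (y!i) (c J)"
proof -
  let ?n = "length y"
  let ?s = "\<lambda>A k. (-1::'a) ^ card {j \<in> A. j < k}"
  have finJ: "finite J" using Jn finite_subset by blast
  define J' where "J' = J - {i}"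
  have J'n: "J' \<subseteq> {..<?n}" using Jn unfolding J'_def by auto
  have iJ': "i \<notin> J'" unfolding J'_def by auto
  have JJ': "insert i J' = J" unfolding J'_def using iJ by auto
  have dom: "{..<?n} - J' = insert i ({..<?n} - J)" using i iJ unfolding J'_def by auto
  have h2: "kos_h scale ?n i (kos_d scale y c) J
      = scale (?s J' i) (kos_d scale y c J')"
    unfolding kos_h_def J'_def using iJ Jn by auto
  also have "kos_d scale y c J' = (\<Sum>k\<in>{..<?n} - J'. scale (?s J' k * y!k) (c (insert k J')))"
    unfolding kos_d_def using J'n by simp
  also have "\<dots> = scale (?s J' i * y!i) (c J) + (\<Sum>k\<in>{..<?n} - J. scale (?s J' k * y!k) (c (insert k J')))"
    unfolding dom using JJ' iJ by (subst sum.insert) auto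
  finally have h2': "kos_h scale ?n i (kos_d scale y c) J
      = scale (y!i) (c J) + (\<Sum>k\<in>{..<?n} - J. scale (?s J' i * (?s J' k * y!k)) (c (insert k J')))"
    by (simp add: scale_sum_right algebra_simps flip: power_add mult.assoc)
  have h1: "kos_d scale y (kos_h scale ?n i c) J
      = (\<Sum>k\<in>{..<?n} - J. scale (?s J k * y!k) (scale (?s (insert k J') i) (c (insert k J'))))"
    unfolding kos_d_def using Jn
  proof (simp only: if_True, intro sum.cong refl)
    fix k assume k: "k \<in> {..<?n} - J"
    have "insert k J - {i} = insert k J'" unfolding J'_def using k iJ by auto
    thus "scale (?s J k * y!k) (kos_h scale ?n i c (insert k J))
        = scale (?s J k * y!k) (scale (?s (insert k J') i) (c (insert k J')))"
      unfolding kos_h_def using k iJ Jn by auto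
  qed
  have "kos_d scale y (kos_h scale ?n i c) J + kos_h scale ?n i (kos_d scale y c) J
      = scale (y!i) (c J) + (\<Sum>k\<in>{..<?n} - J. scale ((?s J k * ?s (insert k J') i + ?s J' i * ?s J' k) * y!k) (c (insert k J')))"
    unfolding h1 h2' by (simp add: sum.distrib[symmetric] algebra_simps)
  also have "\<dots> = scale (y!i) (c J)"
  proof -
    have "\<And>k. k \<in> {..<?n} - J \<Longrightarrow> ?s J k * ?s (insert k J') i + ?s J' i * ?s J' k = 0"
      unfolding J'_def using koszul_sign_cancel[OF finJ iJ] by blast
    thus ?thesis by simp
  qed
  finally show ?thesis .
qed

lemma kos_homotopy:
  assumes i: "i < length y" and c: "\<And>K. \<not> K \<subseteq> {..<length y} \<Longrightarrow> c K = 0"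
  shows "kos_d scale y (kos_h scale (length y) i c) J + kos_h scale (length y) i (kos_d scale y c) J
         = scale (y!i) (c J)"
proof (cases "J \<subseteq> {..<length y}")
  case True
  then show ?thesis using kos_homotopy_mem[OF i] kos_homotopy_not_mem[OF i] by blast
next
  case False
  then show ?thesis using c[OF False] unfolding kos_d_def kos_h_def by auto
qed

lemma kos_h_chains:
  assumes "c \<in> kos_chains n p"
  shows "kos_h scale n i c \<in> kos_chains n (Suc p)"
  unfolding kos_chains_def
proof (intro CollectI allI impI)
  fix K assume K: "\<not> (K \<subseteq> {..<n} \<and> card K = Suc p)"
  show "kos_h scale n i c K = 0"
  proof (cases "i \<in> K \<and> K \<subseteq> {..<n}")
    case True
    then have "finite K" using finite_subset[OF _ finite_lessThan] by blast
    then have "card K = Suc (card (K - {i}))" using True by (intro card.remove) auto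
    then have "card (K - {i}) \<noteq> p" using K True by auto
    then have "c (K - {i}) = 0" using assms unfolding kos_chains_def by blast
    then show ?thesis unfolding kos_h_def by simp
  qed (auto simp: kos_h_def)
qed

lemma kos_d_sum_scale:
  "kos_d scale y (\<lambda>K. \<Sum>i\<in>A. scale (b i) (g i K)) J = (\<Sum>i\<in>A. scale (b i) (kos_d scale y (g i) J))"
proof (cases "J \<subseteq> {..<length y}")
  case True
  have "kos_d scale y (\<lambda>K. \<Sum>i\<in>A. scale (b i) (g i K)) J
      = (\<Sum>k\<in>{..<length y} - J. \<Sum>i\<in>A. scale (b i) (scale ((-1) ^ card {j \<in> J. j < k} * y!k) (g i (insert k J))))"
    unfolding kos_d_def using True by (simp add: scale_sum_right mult.commute)
  also have "\<dots> = (\<Sum>i\<in>A. \<Sum>k\<in>{..<length y} - J. scale (b i) (scale ((-1) ^ card {j \<in> J. j < k} * y!k) (g i (insert k J))))"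
    by (rule sum.swap)
  also have "\<dots> = (\<Sum>i\<in>A. scale (b i) (kos_d scale y (g i) J))"
    unfolding kos_d_def using True by (simp add: scale_sum_right)
  finally show ?thesis .
qed (simp add: kos_d_def)

lemma tuple_smul_UNIV_if_kos_exact:
  assumes "kos_exact scale y"
  shows "tuple_smul y = UNIV"
proof -
  have "u \<in> tuple_smul y" for u
  proof -
    define c :: "nat set \<Rightarrow> 'b" where "c = (\<lambda>I. if I = {} then u else 0)"
    have c: "c \<in> kos_chains (length y) 0"
      unfolding kos_chains_def c_def by (auto dest: finite_subset[OF _ finite_lessThan])
    have "kos_d scale y c = (\<lambda>_. 0)"
      unfolding kos_d_def c_def by auto
    then obtain e where "kos_d scale y e = c"
      using assms[unfolded kos_exact_def, rule_format, OF _ c] by blast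
    then have "u = kos_d scale y e {}" unfolding c_def by simp
    also have "\<dots> = (\<Sum>i<length y. scale (y!i) (e {i}))" unfolding kos_d_def by simp
    finally show ?thesis by (rule tuple_smul_memI)
  qed
  then show ?thesis by blast
qed

lemma kos_exact_if_annihilator:
  assumes b: "\<And>u. scale (1 - (\<Sum>i<length y. y!i * b i)) u = 0"
  shows "kos_exact scale y"
  unfolding kos_exact_def
proof (intro allI impI ballI)
  let ?n = "length y"
  fix p c assume c: "c \<in> kos_chains ?n p" and dc: "kos_d scale y c = (\<lambda>_. 0)"
  define e where "e = (\<lambda>K. \<Sum>i<?n. scale (b i) (kos_h scale ?n i c K))"
  have "\<And>i. kos_h scale ?n i c \<in> kos_chains ?n (Suc p)" using kos_h_chains[OF c] .
  then have "e \<in> kos_chains ?n (Suc p)" unfolding e_def kos_chains_def by simp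
  moreover have "kos_d scale y e J = c J" for J
  proof -
    have "kos_d scale y e J = (\<Sum>i<?n. scale (b i) (kos_d scale y (kos_h scale ?n i c) J))"
      unfolding e_def by (rule kos_d_sum_scale)
    also have "\<dots> = (\<Sum>i<?n. scale (b i) (scale (y!i) (c J)))"
    proof (rule sum.cong[OF refl])
      fix i assume "i \<in> {..<?n}"
      moreover have "kos_h scale ?n i (kos_d scale y c) J = 0" unfolding dc kos_h_def by simp
      moreover have "\<And>K. \<not> K \<subseteq> {..<?n} \<Longrightarrow> c K = 0" using c unfolding kos_chains_def by blast
      ultimately show "scale (b i) (kos_d scale y (kos_h scale ?n i c) J) = scale (b i) (scale (y!i) (c J))"
        using kos_homotopy[of i y c J] by simp
    qed
    also have "\<dots> = c J"
      using b[of "c J"] by (simp add: scale_sum_left mult.commute scale_left_diff_distrib)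
    finally show ?thesis .
  qed
  ultimately show "\<exists>e\<in>kos_chains ?n (Suc p). kos_d scale y e = c" by blast
qed

lemma kos_exact_iff_tuple_smul:
  assumes "finite F" "span F = UNIV"
  shows "kos_exact scale y \<longleftrightarrow> tuple_smul y = UNIV"
proof
  assume "tuple_smul y = UNIV"
  then obtain b where "\<And>u. scale (1 - (\<Sum>i<length y. y!i * b i)) u = 0"
    using nakayama_tuple_smul[OF assms] by blast
  then show "kos_exact scale y" by (rule kos_exact_if_annihilator)
qed (rule tuple_smul_UNIV_if_kos_exact)

end

lemma taylor_spectrum_iff_maximalideal:
  fixes \<phi> :: "'k \<Rightarrow> 'r::comm_ring_1"
  assumes M: "module smul" and fg: "finite F" "module.span smul F = UNIV"
  shows "a \<in> taylor_spectrum \<phi> smul y \<longleftrightarrow> length a = length y \<and>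
    (\<exists>m. maximalideal m cring_class_ops \<and> (\<forall>i<length y. y ! i - \<phi> (a ! i) \<in> m) \<and>
      module.ideal_smul smul m \<noteq> UNIV)"
proof -
  interpret Modules.module smul by (rule M)
  have "set (map2 (\<lambda>yi ai. yi - \<phi> ai) y a) \<subseteq> m \<longleftrightarrow> (\<forall>i<length y. y ! i - \<phi> (a ! i) \<in> m)"
    if "length a = length y" for m
    using that by (auto simp: set_conv_nth)
  then show ?thesis
    unfolding taylor_spectrum_def mem_Collect_eq kos_exact_iff_tuple_smul[OF fg] tuple_smul_ne_UNIV_iff[OF fg]
    by auto
qed

section \<open>Zariski's lemma\<close>

text \<open>The \<open>A\<close>-linear combinations of \<open>V\<close> for a subring \<open>A\<close>; the library's \<open>Span\<close>
  needs a subfield.\<close>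

inductive_set (in ring) aspan :: "'a set \<Rightarrow> 'a set \<Rightarrow> 'a set" for A V where
  az: "\<zero> \<in> aspan A V"
| astep: "a \<in> A \<Longrightarrow> v \<in> V \<Longrightarrow> m \<in> aspan A V \<Longrightarrow> a \<otimes> v \<oplus> m \<in> aspan A V"

context cring
begin

lemma aspan_carrier:
  assumes "A \<subseteq> carrier R" "V \<subseteq> carrier R"
  shows "m \<in> aspan A V \<Longrightarrow> m \<in> carrier R"
  by (induction rule: aspan.induct) (use assms in auto)

lemma aspan_add:
  assumes "subring A R" "V \<subseteq> carrier R"
  shows "m \<in> aspan A V \<Longrightarrow> n \<in> aspan A V \<Longrightarrow> m \<oplus> n \<in> aspan A V"
proof (induction rule: aspan.induct)
  case az
  then show ?case using aspan_carrier[OF subringE(1)[OF assms(1)] assms(2)] by simp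
next
  case (astep a v m)
  have c: "a \<in> carrier R" "v \<in> carrier R" "m \<in> carrier R" "n \<in> carrier R"
    using astep aspan_carrier[OF subringE(1)[OF assms(1)] assms(2)] subringE(1)[OF assms(1)] assms(2)
    by auto
  have "a \<otimes> v \<oplus> m \<oplus> n = a \<otimes> v \<oplus> (m \<oplus> n)" using c by algebra
  then show ?case using astep aspan.astep by auto
qed

lemma aspan_smult:
  assumes "subring A R" "V \<subseteq> carrier R" "b \<in> A"
  shows "m \<in> aspan A V \<Longrightarrow> b \<otimes> m \<in> aspan A V"
proof (induction rule: aspan.induct)
  case az
  then show ?case using assms subringE(1)[OF assms(1)] aspan.az by auto
next
  case (astep a v m)
  have c: "a \<in> carrier R" "v \<in> carrier R" "m \<in> carrier R" "b \<in> carrier R"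
    using astep aspan_carrier[OF subringE(1)[OF assms(1)] assms(2)] subringE(1)[OF assms(1)] assms
    by auto
  have "b \<otimes> (a \<otimes> v \<oplus> m) = (b \<otimes> a) \<otimes> v \<oplus> b \<otimes> m" using c by algebra
  moreover have "b \<otimes> a \<in> A" using subringE(6)[OF assms(1)] astep assms by auto
  ultimately show ?case using astep aspan.astep by auto
qed

lemma aspan_mono_A:
  assumes "A \<subseteq> B" shows "m \<in> aspan A V \<Longrightarrow> m \<in> aspan B V"
  by (induction rule: aspan.induct) (use assms in \<open>auto intro: aspan.intros\<close>)

lemma aspan_mono_V:
  assumes "Z \<subseteq> Y" shows "m \<in> aspan A Z \<Longrightarrow> m \<in> aspan A Y"
  by (induction rule: aspan.induct) (use assms in \<open>auto intro: aspan.intros\<close>)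

lemma aspan_empty: "aspan A {} = {\<zero>}"
proof -
  have "m \<in> aspan A {} \<Longrightarrow> m = \<zero>" for m
    by (induction rule: aspan.induct) auto
  thus ?thesis using aspan.az by auto
qed

lemma aspan_insert_decomp:
  assumes "subring A R" "insert g Z \<subseteq> carrier R"
  shows "m \<in> aspan A (insert g Z) \<Longrightarrow> \<exists>e\<in>aspan A Z. \<exists>d\<in>A. m = e \<oplus> d \<otimes> g"
proof (induction rule: aspan.induct)
  case az
  have "\<zero> \<in> A" using subringE(2)[OF assms(1)] .
  moreover have "\<zero> = \<zero> \<oplus> \<zero> \<otimes> g" using assms by simp
  ultimately show ?case using aspan.az by blast
next
  case (astep a v m)
  then obtain e d where ed: "e \<in> aspan A Z" "d \<in> A" "m = e \<oplus> d \<otimes> g" by blast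
  have AC: "A \<subseteq> carrier R" using subringE(1)[OF assms(1)] .
  have ec: "e \<in> carrier R" using aspan_carrier[OF AC, of Z] assms ed by auto
  have c: "a \<in> carrier R" "v \<in> carrier R" "d \<in> carrier R" "g \<in> carrier R"
    using astep ed AC assms by auto
  show ?case
  proof (cases "v = g")
    case True
    have "a \<otimes> v \<oplus> m = e \<oplus> (a \<oplus> d) \<otimes> g" using c ec ed True by algebra
    moreover have "a \<oplus> d \<in> A" using subringE(7)[OF assms(1)] astep ed by auto
    ultimately show ?thesis using ed by blast
  next
    case False
    hence "v \<in> Z" using astep by auto
    have "a \<otimes> v \<oplus> m = (a \<otimes> v \<oplus> e) \<oplus> d \<otimes> g" using c ec ed by algebra
    moreover have "a \<otimes> v \<oplus> e \<in> aspan A Z" using aspan.astep astep \<open>v \<in> Z\<close> ed by auto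
    ultimately show ?thesis using ed by blast
  qed
qed

lemma aspan_mult_into:
  assumes "subring A R" "V \<subseteq> carrier R" "Y \<subseteq> carrier R" "r \<in> carrier R"
    and "\<And>v. v \<in> V \<Longrightarrow> r \<otimes> v \<in> aspan A Y"
  shows "w \<in> aspan A V \<Longrightarrow> r \<otimes> w \<in> aspan A Y"
proof (induction rule: aspan.induct)
  case az
  then show ?case using assms aspan.az by simp
next
  case (astep a v m)
  have AC: "A \<subseteq> carrier R" using subringE(1)[OF assms(1)] .
  have c: "a \<in> carrier R" "v \<in> carrier R" "m \<in> carrier R"
    using astep aspan_carrier[OF AC assms(2)] AC assms by auto
  have "r \<otimes> (a \<otimes> v \<oplus> m) = a \<otimes> (r \<otimes> v) \<oplus> r \<otimes> m" using c assms by algebra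
  moreover have "a \<otimes> (r \<otimes> v) \<in> aspan A Y"
    using aspan_smult[OF assms(1) assms(3)] astep assms(5) by auto
  ultimately show ?case using aspan_add[OF assms(1) assms(3)] astep by auto
qed

lemma subring_aspan_multipliers:
  assumes A: "subring A R" and V: "V \<subseteq> carrier R"
  shows "subring {f \<in> carrier R. \<forall>m\<in>aspan A V. f \<otimes> m \<in> aspan A V} R" (is "subring ?T R")
proof (rule subringI)
  have AC: "A \<subseteq> carrier R" using subringE(1)[OF A] .
  note aspC = aspan_carrier[OF AC V]
  show "?T \<subseteq> carrier R" by auto
  show "\<one> \<in> ?T" using aspC by auto
next
  fix h assume h: "h \<in> ?T"
  then have "h \<in> carrier R" by blast
  then have "\<ominus> h \<otimes> m = \<ominus> \<one> \<otimes> (h \<otimes> m)" if "m \<in> aspan A V" for m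
    using aspan_carrier[OF subringE(1)[OF A] V that] by algebra
  then show "\<ominus> h \<in> ?T" using h aspan_smult[OF A V] subringE(3,5)[OF A] by auto
next
  fix h1 h2 assume h: "h1 \<in> ?T" "h2 \<in> ?T"
  then have "h1 \<in> carrier R" "h2 \<in> carrier R" by blast+
  then have "(h1 \<otimes> h2) \<otimes> m = h1 \<otimes> (h2 \<otimes> m)" "(h1 \<oplus> h2) \<otimes> m = h1 \<otimes> m \<oplus> h2 \<otimes> m"
    if "m \<in> aspan A V" for m
    using aspan_carrier[OF subringE(1)[OF A] V that] by algebra+
  then show "h1 \<otimes> h2 \<in> ?T" "h1 \<oplus> h2 \<in> ?T" using h aspan_add[OF A V] by auto
qed

lemma finite_extension_subset_aspan:
  assumes A: "subring A R" and V: "V \<subseteq> carrier R" and KA: "K \<subseteq> A" and xs: "set xs \<subseteq> carrier R"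
    and one: "\<one> \<in> aspan A V" and xsV: "\<And>x v. x \<in> set xs \<Longrightarrow> v \<in> V \<Longrightarrow> x \<otimes> v \<in> aspan A V"
  shows "finite_extension K xs \<subseteq> aspan A V"
proof
  let ?T = "{f \<in> carrier R. \<forall>m\<in>aspan A V. f \<otimes> m \<in> aspan A V}"
  have AC: "A \<subseteq> carrier R" using subringE(1)[OF A] .
  have "A \<subseteq> ?T" using AC aspan_smult[OF A V] by auto
  moreover have "set xs \<subseteq> ?T" using xs aspan_mult_into[OF A V V] xsV by auto
  ultimately have "finite_extension K xs \<subseteq> ?T"
    using finite_extension_subring_incl[OF subring_aspan_multipliers[OF A V]] KA by blast
  moreover fix f assume "f \<in> finite_extension K xs"
  ultimately have "f \<in> carrier R" "f \<otimes> \<one> \<in> aspan A V" using one by auto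
  then show "f \<in> aspan A V" by simp
qed

lemma aspan_kill_generator:
  assumes A: "subring A R" and V: "V \<subseteq> carrier R" and Z: "insert g Z \<subseteq> carrier R"
    and h: "h \<in> A" and w: "w \<in> aspan A V" "g = h \<otimes> w"
    and r: "r \<in> A" "\<And>v. v \<in> V \<Longrightarrow> r \<otimes> v \<in> aspan A (insert g Z)"
  obtains d where "d \<in> A" "(r \<ominus> h \<otimes> d) \<otimes> g \<in> aspan A Z"
proof -
  have AC: "A \<subseteq> carrier R" using subringE(1)[OF A] .
  have c: "h \<in> carrier R" "r \<in> carrier R" "g \<in> carrier R" "w \<in> carrier R"
    using h r Z AC aspan_carrier[OF AC V w(1)] by auto
  have "r \<otimes> w \<in> aspan A (insert g Z)"
    using aspan_mult_into[OF A V Z c(2) r(2) w(1)] .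
  then obtain e d where ed: "e \<in> aspan A Z" "d \<in> A" "r \<otimes> w = e \<oplus> d \<otimes> g"
    using aspan_insert_decomp[OF A Z] by blast
  have ec: "e \<in> carrier R" "d \<in> carrier R" using aspan_carrier[OF AC] Z ed AC by auto
  have "(r \<ominus> h \<otimes> d) \<otimes> g = h \<otimes> (r \<otimes> w) \<ominus> h \<otimes> d \<otimes> g"
    unfolding w(2) using c ec by algebra
  also have "\<dots> = h \<otimes> e" unfolding ed(3) using c ec by algebra
  finally have "(r \<ominus> h \<otimes> d) \<otimes> g = h \<otimes> e" .
  then show ?thesis using that ed aspan_smult[OF A _ h ed(1)] Z by auto
qed

lemma aspan_nakayama_step:
  assumes A: "subring A R" and V: "V \<subseteq> carrier R" and g: "g \<in> V" and Z: "Z \<subseteq> V" and h: "h \<in> A"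
    and gen: "\<And>v. v \<in> V \<Longrightarrow> \<exists>w\<in>aspan A V. v = h \<otimes> w"
    and a: "a \<in> A" "\<And>v. v \<in> V \<Longrightarrow> (\<one> \<oplus> h \<otimes> a) \<otimes> v \<in> aspan A (insert g Z)"
  shows "\<exists>a'\<in>A. \<forall>v\<in>V. (\<one> \<oplus> h \<otimes> a') \<otimes> v \<in> aspan A Z"
proof -
  have AC: "A \<subseteq> carrier R" using subringE(1)[OF A] .
  have ZC: "Z \<subseteq> carrier R" and IC: "insert g Z \<subseteq> carrier R" using V g Z by auto
  define r where "r = \<one> \<oplus> h \<otimes> a"
  have rA: "r \<in> A" unfolding r_def using subringE[OF A] a h by auto
  obtain w where w: "w \<in> aspan A V" "g = h \<otimes> w" using gen g by blast
  obtain d where d: "d \<in> A" "(r \<ominus> h \<otimes> d) \<otimes> g \<in> aspan A Z"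
    using aspan_kill_generator[OF A V IC h w rA] a(2) unfolding r_def by blast
  define s where "s = r \<ominus> h \<otimes> d"
  have sA: "s \<in> A" unfolding s_def a_minus_def using subringE[OF A] rA h d by auto
  have c: "h \<in> carrier R" "a \<in> carrier R" "d \<in> carrier R" "s \<in> carrier R" "r \<in> carrier R" "g \<in> carrier R"
    using h a d sA rA AC IC by auto
  define a' where "a' = a \<oplus> (a \<ominus> d) \<otimes> r"
  have a'A: "a' \<in> A" unfolding a'_def a_minus_def using subringE[OF A] a rA d by auto
  have eq: "\<one> \<oplus> h \<otimes> a' = s \<otimes> r"
    unfolding a'_def s_def r_def using c by algebra
  have "(\<one> \<oplus> h \<otimes> a') \<otimes> v \<in> aspan A Z" if v: "v \<in> V" for v
  proof -
    have vc: "v \<in> carrier R" using v V by auto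
    obtain e d' where ed: "e \<in> aspan A Z" "d' \<in> A" "r \<otimes> v = e \<oplus> d' \<otimes> g"
      using aspan_insert_decomp[OF A IC] a(2)[OF v] unfolding r_def by blast
    have ec: "e \<in> carrier R" "d' \<in> carrier R" using aspan_carrier[OF AC ZC] ed AC by auto
    have "(\<one> \<oplus> h \<otimes> a') \<otimes> v = s \<otimes> (r \<otimes> v)" unfolding eq using c vc by algebra
    also have "\<dots> = s \<otimes> e \<oplus> d' \<otimes> (s \<otimes> g)" unfolding ed(3) using c ec by algebra
    also have "\<dots> \<in> aspan A Z"
      using aspan_add[OF A ZC] aspan_smult[OF A ZC sA ed(1)] aspan_smult[OF A ZC ed(2)] d(2)
      unfolding s_def by blast
    finally show ?thesis .
  qed
  then show ?thesis using a'A by blast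
qed

lemma aspan_nakayama:
  assumes A: "subring A R" and V: "V \<subseteq> carrier R" "finite V" and h: "h \<in> A"
    and gen: "\<And>v. v \<in> V \<Longrightarrow> \<exists>w\<in>aspan A V. v = h \<otimes> w"
  obtains a where "a \<in> A" "\<And>v. v \<in> V \<Longrightarrow> (\<one> \<oplus> h \<otimes> a) \<otimes> v = \<zero>"
proof -
  have "\<exists>a\<in>A. \<forall>v\<in>V. (\<one> \<oplus> h \<otimes> a) \<otimes> v \<in> aspan A (V - W)" if "W \<subseteq> V" for W
    using finite_subset[OF that V(2)] that
  proof (induction W rule: finite_induct)
    case empty
    have "(\<one> \<oplus> h \<otimes> \<zero>) \<otimes> v \<in> aspan A V" if "v \<in> V" for v
    proof -
      have "h \<in> carrier R" "v \<in> carrier R" using that V h subringE(1)[OF A] by auto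
      then have "(\<one> \<oplus> h \<otimes> \<zero>) \<otimes> v = \<one> \<otimes> v \<oplus> \<zero>" by simp
      then show ?thesis using aspan.astep[OF subringE(3)[OF A] that aspan.az] by simp
    qed
    then show ?case using subringE(2)[OF A] by auto
  next
    case (insert g W)
    have VW: "V - W = insert g (V - insert g W)" using insert.hyps(2) insert.prems by blast
    obtain a where "a \<in> A" "\<forall>v\<in>V. (\<one> \<oplus> h \<otimes> a) \<otimes> v \<in> aspan A (V - W)"
      using insert.IH insert.prems by blast
    then show ?case
      using aspan_nakayama_step[OF A V(1) _ _ h gen, of g "V - insert g W" a] insert.prems VW by auto
  qed
  from this[OF order_refl] obtain a where "a \<in> A" "\<forall>v\<in>V. (\<one> \<oplus> h \<otimes> a) \<otimes> v \<in> aspan A {}"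
    by auto
  then show ?thesis using that aspan_empty by auto
qed

end

context field
begin

lemma generate_field_denominator:
  assumes S: "subring S R" and H: "H \<subseteq> S"
  shows "c \<in> generate_field R H \<Longrightarrow> \<exists>b\<in>S - {\<zero>}. c \<otimes> b \<in> S"
proof (induction rule: generate_field.induct)
  have SC: "S \<subseteq> carrier R" using subringE(1)[OF S] .
  {
  case one
  show ?case using subringE(3)[OF S] by (intro bexI[of _ \<one>]) auto
  next
  case (incl h)
  hence "h \<in> S" "h \<in> carrier R" using H SC by auto
  then show ?case using subringE(3)[OF S] by (intro bexI[of _ \<one>]) auto
  next
  case (a_inv h)
  then obtain b where b: "b \<in> S - {\<zero>}" "h \<otimes> b \<in> S" by auto
  have hc: "h \<in> carrier R" using generate_field_in_carrier H SC a_inv by blast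
  have "b \<in> carrier R" using b SC by auto
  hence "\<ominus> h \<otimes> b = \<ominus> (h \<otimes> b)" using hc by (simp add: l_minus)
  moreover have "\<ominus> (h \<otimes> b) \<in> S" using b subringE(5)[OF S] by blast
  ultimately have "\<ominus> h \<otimes> b \<in> S" by simp
  show ?case by (rule bexI[of _ b]) (use b \<open>\<ominus> h \<otimes> b \<in> S\<close> in auto)
  next
  case (m_inv h)
  then obtain b where b: "b \<in> S - {\<zero>}" "h \<otimes> b \<in> S" by auto
  have hc: "h \<in> carrier R" using generate_field_in_carrier H SC m_inv by blast
  have bc: "b \<in> carrier R" using b SC by auto
  have hb0: "h \<otimes> b \<noteq> \<zero>" using m_inv b hc bc integral by blast
  have hU: "h \<in> Units R" using hc m_inv field_Units by auto
  have "inv h \<otimes> (h \<otimes> b) = (inv h \<otimes> h) \<otimes> b" using hU hc bc by (simp add: m_assoc[symmetric] Units_inv_closed)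
  also have "\<dots> = b" using hU bc by simp
  finally have "inv h \<otimes> (h \<otimes> b) = b" .
  then show ?case using b hb0 by (intro bexI[of _ "h \<otimes> b"]) auto
  next
  case (eng_add h1 h2)
  then obtain b1 b2 where b: "b1 \<in> S - {\<zero>}" "h1 \<otimes> b1 \<in> S" "b2 \<in> S - {\<zero>}" "h2 \<otimes> b2 \<in> S" by auto
  have hc: "h1 \<in> carrier R" "h2 \<in> carrier R" using generate_field_in_carrier H SC eng_add by blast+
  have bc: "b1 \<in> carrier R" "b2 \<in> carrier R" using b SC by auto
  have "(h1 \<oplus> h2) \<otimes> (b1 \<otimes> b2) = (h1 \<otimes> b1) \<otimes> b2 \<oplus> (h2 \<otimes> b2) \<otimes> b1"
    using hc bc by algebra
  moreover have "b1 \<otimes> b2 \<in> S - {\<zero>}" using b bc integral subringE(6)[OF S] by auto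
  moreover have "(h1 \<otimes> b1) \<otimes> b2 \<oplus> (h2 \<otimes> b2) \<otimes> b1 \<in> S"
    using b subringE(6,7)[OF S] by auto
  ultimately show ?case by metis
  next
  case (eng_mult h1 h2)
  then obtain b1 b2 where b: "b1 \<in> S - {\<zero>}" "h1 \<otimes> b1 \<in> S" "b2 \<in> S - {\<zero>}" "h2 \<otimes> b2 \<in> S" by auto
  have hc: "h1 \<in> carrier R" "h2 \<in> carrier R" using generate_field_in_carrier H SC eng_mult by blast+
  have bc: "b1 \<in> carrier R" "b2 \<in> carrier R" using b SC by auto
  have "(h1 \<otimes> h2) \<otimes> (b1 \<otimes> b2) = (h1 \<otimes> b1) \<otimes> (h2 \<otimes> b2)"
    using hc bc by algebra
  moreover have "b1 \<otimes> b2 \<in> S - {\<zero>}" using b bc integral subringE(6)[OF S] by auto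
  moreover have "(h1 \<otimes> b1) \<otimes> (h2 \<otimes> b2) \<in> S"
    using b subringE(6)[OF S] by auto
  ultimately show ?case by metis
  }
qed

text \<open>The ring \<open>S[1/g]\<close>, taken inside the ambient field.\<close>

definition localize :: "'a set \<Rightarrow> 'a \<Rightarrow> 'a set" where
  "localize S g = {c \<in> carrier R. \<exists>n::nat. c \<otimes> g [^] n \<in> S}"

lemma subring_localize:
  assumes S: "subring S R" and g: "g \<in> S"
  shows "subring (localize S g) R"
proof -
  have SC: "S \<subseteq> carrier R" using subringE(1)[OF S] .
  have gc: "g \<in> carrier R" using g SC by auto
  have gp: "g [^] (n::nat) \<in> S" for n
    by (induction n) (use subringE(3,6)[OF S] g in auto)
  show ?thesis
  proof (rule subringI)
    show "localize S g \<subseteq> carrier R" unfolding localize_def by auto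
    show "\<one> \<in> localize S g" unfolding localize_def
      using subringE(3)[OF S] by (auto intro!: exI[of _ 0])
  next
    fix h assume "h \<in> localize S g"
    then obtain n :: nat where n: "h \<in> carrier R" "h \<otimes> g [^] n \<in> S" unfolding localize_def by auto
    have "\<ominus> h \<otimes> g [^] n = \<ominus> (h \<otimes> g [^] n)" using n gc by (simp add: l_minus)
    hence "\<ominus> h \<otimes> g [^] n \<in> S" using n subringE(5)[OF S] by simp
    thus "\<ominus> h \<in> localize S g" unfolding localize_def using n by blast
  next
    fix h1 h2 assume "h1 \<in> localize S g" "h2 \<in> localize S g"
    then obtain n1 n2 :: nat where n: "h1 \<in> carrier R" "h1 \<otimes> g [^] n1 \<in> S"
        "h2 \<in> carrier R" "h2 \<otimes> g [^] n2 \<in> S" unfolding localize_def by auto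
    have "(h1 \<otimes> h2) \<otimes> g [^] (n1 + n2) = (h1 \<otimes> g [^] n1) \<otimes> (h2 \<otimes> g [^] n2)"
      using n gc by (simp add: nat_pow_mult[symmetric] m_ac)
    hence "(h1 \<otimes> h2) \<otimes> g [^] (n1 + n2) \<in> S" using n subringE(6)[OF S] by simp
    thus "h1 \<otimes> h2 \<in> localize S g" unfolding localize_def using n by blast
    have G: "g [^] n1 \<in> carrier R" "g [^] n2 \<in> carrier R" using gc by auto
    have "(h1 \<oplus> h2) \<otimes> g [^] (n1 + n2) = (h1 \<oplus> h2) \<otimes> (g [^] n1 \<otimes> g [^] n2)"
      using gc by (simp add: nat_pow_mult)
    also have "\<dots> = (h1 \<otimes> g [^] n1) \<otimes> g [^] n2 \<oplus> (h2 \<otimes> g [^] n2) \<otimes> g [^] n1"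
      using n G by algebra
    finally have "(h1 \<oplus> h2) \<otimes> g [^] (n1 + n2) = (h1 \<otimes> g [^] n1) \<otimes> g [^] n2 \<oplus> (h2 \<otimes> g [^] n2) \<otimes> g [^] n1" .
    hence "(h1 \<oplus> h2) \<otimes> g [^] (n1 + n2) \<in> S" using n subringE(6,7)[OF S] gp by simp
    thus "h1 \<oplus> h2 \<in> localize S g" unfolding localize_def using n by blast
  qed
qed

lemma subset_localize:
  assumes S: "subring S R" shows "S \<subseteq> localize S g"
  using subringE(1)[OF S] unfolding localize_def by (auto intro!: exI[of _ 0])

lemma localize_subset_mult:
  assumes S: "subring S R" and g: "g \<in> S" and b: "b \<in> S"
  shows "localize S g \<subseteq> localize S (g \<otimes> b)"
proof
  have SC: "S \<subseteq> carrier R" using subringE(1)[OF S] .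
  have bp: "b [^] (n::nat) \<in> S" for n
    by (induction n) (use subringE(3,6)[OF S] b in auto)
  fix c assume "c \<in> localize S g"
  then obtain n :: nat where n: "c \<in> carrier R" "c \<otimes> g [^] n \<in> S" unfolding localize_def by auto
  have gc: "g \<in> carrier R" "b \<in> carrier R" using g b SC by auto
  have "c \<otimes> (g \<otimes> b) [^] n = (c \<otimes> g [^] n) \<otimes> b [^] n"
    using n gc by (simp add: nat_pow_distrib m_assoc)
  hence "c \<otimes> (g \<otimes> b) [^] n \<in> S" using n bp subringE(6)[OF S] by simp
  thus "c \<in> localize S (g \<otimes> b)" unfolding localize_def using n by blast
qed

lemma Span_subset_aspan:
  assumes "set Us \<subseteq> carrier R"
  shows "Span L Us \<subseteq> aspan L (set Us)"
  using assms
proof (induction Us)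
  case Nil
  then show ?case using aspan.az by auto
next
  case (Cons u Us)
  show ?case
  proof
    fix x assume "x \<in> Span L (u # Us)"
    then obtain k v where kv: "k \<in> L" "v \<in> Span L Us" "x = k \<otimes> u \<oplus> v"
      using line_extension_mem_iff by auto
    have "v \<in> aspan L (set (u # Us))"
      using Cons aspan_mono_V[of "set Us" "set (u#Us)"] kv by auto
    thus "x \<in> aspan L (set (u # Us))" using kv aspan.astep by auto
  qed
qed

lemma aspan_localize:
  assumes S: "subring S R" and V: "V \<subseteq> carrier R"
    and fr: "\<And>c. c \<in> L \<Longrightarrow> \<exists>b\<in>S - {\<zero>}. c \<otimes> b \<in> S" and LC: "L \<subseteq> carrier R"
  shows "x \<in> aspan L V \<Longrightarrow> \<exists>g\<in>S - {\<zero>}. x \<in> aspan (localize S g) V"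
proof (induction rule: aspan.induct)
  case az
  then show ?case using subringE(3)[OF S] aspan.az by auto
next
  case (astep a v m)
  have SC: "S \<subseteq> carrier R" using subringE(1)[OF S] .
  obtain g where g: "g \<in> S - {\<zero>}" "m \<in> aspan (localize S g) V" using astep by auto
  obtain b where b: "b \<in> S - {\<zero>}" "a \<otimes> b \<in> S" using fr astep by auto
  have gb: "g \<otimes> b \<in> S - {\<zero>}" using g b SC integral[of g b] subringE(6)[OF S] by auto
  have bc: "b \<in> carrier R" "g \<in> carrier R" using b g SC by auto
  have "a \<in> localize S b" unfolding localize_def using b astep LC bc
    by (auto intro!: exI[of _ 1])
  moreover have "b \<otimes> g = g \<otimes> b" using bc m_comm by auto
  ultimately have "a \<in> localize S (g \<otimes> b)"
    using localize_subset_mult[OF S, of b g] b g by auto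
  moreover have "m \<in> aspan (localize S (g \<otimes> b)) V"
    using aspan_mono_A[OF localize_subset_mult[OF S, of g b]] g b by auto
  ultimately show ?case using gb astep aspan.astep by blast
qed

lemma finite_subset_aspan_localize:
  assumes S: "subring S R" and V: "V \<subseteq> carrier R"
    and fr: "\<And>c. c \<in> L \<Longrightarrow> \<exists>b\<in>S - {\<zero>}. c \<otimes> b \<in> S" and LC: "L \<subseteq> carrier R"
    and F: "finite F" "F \<subseteq> aspan L V"
  shows "\<exists>g\<in>S - {\<zero>}. F \<subseteq> aspan (localize S g) V"
  using F
proof (induction F rule: finite_induct)
  case empty
  then show ?case using subringE(3)[OF S] by auto
next
  case (insert x F)
  have SC: "S \<subseteq> carrier R" using subringE(1)[OF S] .
  obtain g where g: "g \<in> S - {\<zero>}" "F \<subseteq> aspan (localize S g) V" using insert by auto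
  have "x \<in> aspan L V" using insert by auto
  then obtain b where b: "b \<in> S - {\<zero>}" "x \<in> aspan (localize S b) V"
    using aspan_localize[OF S V fr LC] by blast
  have gb: "g \<otimes> b \<in> S - {\<zero>}" using g b SC integral[of g b] subringE(6)[OF S] by auto
  have F1: "F \<subseteq> aspan (localize S (g \<otimes> b)) V"
    using aspan_mono_A[OF localize_subset_mult[OF S, of g b]] g b by auto
  have gbc: "g \<in> carrier R" "b \<in> carrier R" using g b SC by auto
  hence "b \<otimes> g = g \<otimes> b" using m_comm by simp
  hence x1: "x \<in> aspan (localize S (g \<otimes> b)) V"
    using aspan_mono_A[OF localize_subset_mult[OF S, of b g]] g b by auto
  show ?case using gb F1 x1 by (intro bexI[of _ "g \<otimes> b"]) auto
qed


lemma eval_linear: "x \<in> carrier R \<Longrightarrow> c \<in> carrier R \<Longrightarrow> eval [\<one>, \<ominus> c] x = x \<ominus> c"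
  by (simp add: a_minus_def)

lemma transcendental_eval_shift:
  assumes K: "subfield K R" and t: "t \<in> carrier R" "(transcendental over K) t" and c: "c \<in> K"
    and P: "P \<in> carrier (K[X])" and Q: "Q \<in> carrier (K[X])"
    and eq: "eval P t \<oplus> (t \<ominus> c) \<otimes> eval Q t = \<zero>"
  shows "eval P c = \<zero>"
proof -
  have KS: "subring K R" using subfieldE(1)[OF K] .
  have cc: "c \<in> carrier R" using c subfieldE(3)[OF K] by auto
  interpret UP: cring "K[X]" using univ_poly_is_cring[OF KS] .
  define B where "B = [\<one>, \<ominus> c]"
  have "polynomial K B" unfolding B_def polynomial_def using subringE(3,5)[OF KS] c by auto
  then have B: "B \<in> carrier (K[X])" using univ_poly_carrier by blast
  define Z where "Z = P \<oplus>\<^bsub>K[X]\<^esub> B \<otimes>\<^bsub>K[X]\<^esub> Q"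
  have Z: "Z \<in> carrier (K[X])" unfolding Z_def using P B Q by auto
  have ev: "eval Z x = eval P x \<oplus> (x \<ominus> c) \<otimes> eval Q x" if "x \<in> carrier R" for x
    unfolding Z_def using P B Q eval_linear[OF that cc]
    by (simp add: ring_hom_add[OF eval_is_hom[OF KS that]] ring_hom_mult[OF eval_is_hom[OF KS that]]
        B_def[symmetric] del: eval.simps)
  have "Z = []" using eval_transcendental[OF t(2) Z] ev[OF t(1)] eq by simp
  then have "eval P c \<oplus> (c \<ominus> c) \<otimes> eval Q c = \<zero>" using ev[OF cc] by simp
  moreover have "eval P c \<in> carrier R" "eval Q c \<in> carrier R"
    using ring_hom_closed[OF eval_is_hom[OF KS cc]] P Q by auto
  moreover have "(c \<ominus> c) \<otimes> eval Q c = \<zero>" using cc \<open>eval Q c \<in> carrier R\<close> by (simp add: a_minus_def r_neg)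
  ultimately show ?thesis by simp
qed

lemma localize_simple_extension_nonunit:
  assumes K: "subfield K R" "infinite K" and t: "t \<in> carrier R" "(transcendental over K) t"
    and g: "g \<in> simple_extension K t" "g \<noteq> \<zero>"
  obtains h where "h \<in> simple_extension K t" "h \<noteq> \<zero>"
    "\<And>a. a \<in> localize (simple_extension K t) g \<Longrightarrow> \<one> \<oplus> h \<otimes> a \<noteq> \<zero>"
proof -
  have KS: "subring K R" and KC: "K \<subseteq> carrier R" using subfieldE(1,3)[OF K(1)] .
  define S where "S = simple_extension K t"
  have S: "subring S R" unfolding S_def using simple_extension_is_subring[OF KS t(1)] .
  have SC: "S \<subseteq> carrier R" using subringE(1)[OF S] .
  obtain P where P: "P \<in> carrier (K[X])" "g = eval P t"
    using simple_extension_as_eval_img[OF KC t(1)] g by auto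
  have "polynomial K P" using P(1) univ_poly_carrier by blast
  then have "polynomial (carrier R) P" using KC unfolding polynomial_def by auto
  then have "finite {x. is_root P x}" using finite_number_of_roots univ_poly_carrier by blast
  then have "\<not> K \<subseteq> {x. is_root P x}" using K(2) finite_subset by blast
  then obtain c where c: "c \<in> K" "\<not> is_root P c" by blast
  have cc: "c \<in> carrier R" using c KC by auto
  have Pc: "eval P c \<noteq> \<zero>" using c cc P g unfolding is_root_def by auto
  define h where "h = t \<ominus> c"
  have "t \<in> S" "c \<in> S" unfolding S_def
    using simple_extension_mem[OF KS t(1)] simple_extension_incl[OF KC t(1)] c by auto
  then have hS: "h \<in> S" unfolding h_def a_minus_def using subringE(5,7)[OF S] by auto
  have "h \<noteq> \<zero>"
  proof
    assume "h = \<zero>"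
    then have "t = c" unfolding h_def using t cc by (metis r_right_minus_eq)
    then show False using t(2) algebraic_self[OF KS c(1)] unfolding over_def by auto
  qed
  moreover have "\<one> \<oplus> h \<otimes> a \<noteq> \<zero>" if a: "a \<in> localize S g" for a
  proof
    assume r0: "\<one> \<oplus> h \<otimes> a = \<zero>"
    obtain n :: nat where n: "a \<otimes> g [^] n \<in> S" "a \<in> carrier R" using a unfolding localize_def by auto
    obtain Q where Q: "Q \<in> carrier (K[X])" "a \<otimes> g [^] n = eval Q t"
      using simple_extension_as_eval_img[OF KC t(1)] n unfolding S_def by auto
    interpret UP: cring "K[X]" using univ_poly_is_cring[OF KS] .
    have hom: "ring_hom_ring (K[X]) R (\<lambda>p. eval p x)" if "x \<in> carrier R" for x
      using ring_hom_ringI2[OF UP.ring_axioms ring_axioms eval_is_hom[OF KS that]] .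
    have gc: "g \<in> carrier R" "h \<in> carrier R" using g(1) hS SC unfolding S_def by auto
    define G where "G = g [^] n"
    have Gc: "G \<in> carrier R" unfolding G_def using gc by simp
    have "eval (P [^]\<^bsub>K[X]\<^esub> n) t \<oplus> (t \<ominus> c) \<otimes> eval Q t = G \<oplus> h \<otimes> (a \<otimes> G)"
      using ring_hom_ring.hom_nat_pow[OF hom[OF t(1)] P(1)] P(2) Q(2)
      unfolding G_def h_def by simp
    also have "\<dots> = G \<otimes> (\<one> \<oplus> h \<otimes> a)" using Gc gc n(2) by (simp add: r_distr m_ac)
    also have "\<dots> = \<zero>" using r0 Gc by simp
    finally have "eval (P [^]\<^bsub>K[X]\<^esub> n) c = \<zero>"
      by (rule transcendental_eval_shift[OF K(1) t c(1) UP.nat_pow_closed[OF P(1)] Q(1)])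
    then have "eval P c [^] n = \<zero>"
      using ring_hom_ring.hom_nat_pow[OF hom[OF cc] P(1)] by simp
    then show False
      using Pc ring_hom_closed[OF eval_is_hom[OF KS cc] P(1)] by simp
  qed
  ultimately show ?thesis using that hS unfolding S_def by blast
qed


lemma finite_aspan_localize:
  assumes K: "subfield K R" and t: "t \<in> carrier R" and ys: "set ys \<subseteq> carrier R"
    and gen: "carrier R \<subseteq> finite_extension K (t # ys)"
    and fd: "finite_dimension (generate_field R (insert t K)) (carrier R)"
  obtains g V where "g \<in> simple_extension K t" "g \<noteq> \<zero>" "finite V" "V \<subseteq> carrier R"
    "carrier R \<subseteq> aspan (localize (simple_extension K t) g) V"
proof -
  have KS: "subring K R" and KC: "K \<subseteq> carrier R" using subfieldE(1,3)[OF K] .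
  define S where "S = simple_extension K t"
  have S: "subring S R" unfolding S_def using simple_extension_is_subring[OF KS t] .
  have KS': "K \<subseteq> S" "t \<in> S"
    unfolding S_def using simple_extension_incl[OF KC t] simple_extension_mem[OF KS t] by auto
  define L where "L = generate_field R (insert t K)"
  have L: "subfield L R" unfolding L_def using generate_field_is_subfield KC t by auto
  have LC: "L \<subseteq> carrier R" using subfieldE(3)[OF L] .
  have fr: "\<And>c. c \<in> L \<Longrightarrow> \<exists>b\<in>S - {\<zero>}. c \<otimes> b \<in> S"
    unfolding L_def using generate_field_denominator[OF S] KS' by blast
  have "dimension ((dim over L) (carrier R)) L (carrier R)"
    using finite_dimensionE[OF L] fd unfolding L_def by blast
  then obtain Us where Us: "set Us \<subseteq> carrier R" "Span L Us = carrier R"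
    using exists_base[OF L] by blast
  define V where "V = set Us"
  have V: "V \<subseteq> carrier R" "finite V" using Us unfolding V_def by auto
  have all: "carrier R \<subseteq> aspan L V" using Span_subset_aspan[OF Us(1)] Us(2) unfolding V_def by auto
  \<comment> \<open>the finitely many coefficients that matter share a denominator g\<close>
  define F where "F = insert \<one> ((\<lambda>(y,u). y \<otimes> u) ` (set ys \<times> V))"
  have F: "finite F" "F \<subseteq> carrier R" unfolding F_def using ys V by auto
  obtain g where g: "g \<in> S - {\<zero>}" "F \<subseteq> aspan (localize S g) V"
    using finite_subset_aspan_localize[OF S V(1) fr LC F(1)] F(2) all by blast
  define A where "A = localize S g"
  have A: "subring A R" unfolding A_def using subring_localize[OF S] g by auto
  have SA: "S \<subseteq> A" unfolding A_def using subset_localize[OF S] .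
  have "finite_extension K (t # ys) \<subseteq> aspan A V"
  proof (rule finite_extension_subset_aspan[OF A V(1)])
    show "K \<subseteq> A" "set (t # ys) \<subseteq> carrier R" using KS' SA t ys by auto
    show "\<one> \<in> aspan A V" using g(2) unfolding F_def A_def by blast
    fix x v assume x: "x \<in> set (t # ys)" and v: "v \<in> V"
    show "x \<otimes> v \<in> aspan A V"
    proof (cases "x = t")
      case True
      have "t \<otimes> v \<oplus> \<zero> \<in> aspan A V" using aspan.astep[OF _ v aspan.az] KS' SA by blast
      then show ?thesis using True t v V(1) by auto
    next
      case False
      then have "x \<otimes> v \<in> F" using x v unfolding F_def by auto
      then show ?thesis using g(2) unfolding A_def by blast
    qed
  qed
  then have "carrier R \<subseteq> aspan (localize S g) V" using gen unfolding A_def by blast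
  then show ?thesis using that g V unfolding S_def by blast
qed

lemma transcendental_generator_contradiction:
  assumes K: "subfield K R" "infinite K" and t: "t \<in> carrier R" "(transcendental over K) t"
    and ys: "set ys \<subseteq> carrier R" and gen: "carrier R \<subseteq> finite_extension K (t # ys)"
    and fd: "finite_dimension (generate_field R (insert t K)) (carrier R)"
  shows False
proof -
  have KS: "subring K R" using subfieldE(1)[OF K(1)] .
  define S where "S = simple_extension K t"
  have S: "subring S R" unfolding S_def using simple_extension_is_subring[OF KS t(1)] .
  obtain g V where g: "g \<in> S" "g \<noteq> \<zero>" and V: "finite V" "V \<subseteq> carrier R"
    and all: "carrier R \<subseteq> aspan (localize S g) V"
    using finite_aspan_localize[OF K(1) t(1) ys gen fd] unfolding S_def by blast
  obtain h where h: "h \<in> S" "h \<noteq> \<zero>" and nonunit: "\<And>a. a \<in> localize S g \<Longrightarrow> \<one> \<oplus> h \<otimes> a \<noteq> \<zero>"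
    using localize_simple_extension_nonunit[OF K t g[unfolded S_def]] g(2) unfolding S_def by blast
  define A where "A = localize S g"
  have A: "subring A R" unfolding A_def using subring_localize[OF S g(1)] .
  have hA: "h \<in> A" using h subset_localize[OF S] unfolding A_def by auto
  have hc: "h \<in> carrier R" using h S subringE(1) by auto
  then have hU: "h \<in> Units R" using h(2) field_Units by auto
  \<comment> \<open>h is invertible in the field R, so every element of V is divisible by h in the A-module\<close>
  have "\<exists>w\<in>aspan A V. v = h \<otimes> w" if "v \<in> V" for v
  proof -
    have vc: "v \<in> carrier R" using that V by auto
    then have "h \<otimes> (inv h \<otimes> v) = v" using hU hc by (simp add: m_assoc[symmetric])
    moreover have "inv h \<otimes> v \<in> aspan A V" using all hU vc unfolding A_def by auto
    ultimately show ?thesis by metis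
  qed
  then obtain a where a: "a \<in> A" "\<And>v. v \<in> V \<Longrightarrow> (\<one> \<oplus> h \<otimes> a) \<otimes> v = \<zero>"
    using aspan_nakayama[OF A V(2,1) hA] by blast
  have r: "\<one> \<oplus> h \<otimes> a \<in> carrier R" using a(1) hA subringE(1)[OF A] by auto
  have "(\<one> \<oplus> h \<otimes> a) \<otimes> \<one> \<in> aspan A {}"
    using aspan_mult_into[OF A V(2) _ r, of "{}" \<one>] a(2) aspan.az all unfolding A_def by auto
  then have "\<one> \<oplus> h \<otimes> a = \<zero>" using aspan_empty r by auto
  then show False using nonunit a(1) unfolding A_def by blast
qed

end

context field
begin

definition algebraically_closed :: "'a set \<Rightarrow> bool" where
  "algebraically_closed K \<longleftrightarrow> (\<forall>p\<in>carrier (K[X]). degree p > 0 \<longrightarrow> (\<exists>c\<in>K. eval p c = \<zero>))"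

lemma finite_extension_Cons_subset:
  assumes L: "subfield L R" and KL: "K \<subseteq> L" and tL: "t \<in> L" and ys: "set ys \<subseteq> carrier R"
  shows "finite_extension K (t # ys) \<subseteq> finite_extension L ys"
proof -
  have LS: "subring L R" using subfieldE(1)[OF L] .
  have LC: "L \<subseteq> carrier R" using subfieldE(3)[OF L] .
  have FS: "subring (finite_extension L ys) R" using finite_extension_is_subring[OF LS ys] .
  have LF: "L \<subseteq> finite_extension L ys" using finite_extension_incl[OF LC ys] .
  have "set ys \<subseteq> finite_extension L ys" using finite_extension_mem[OF LS ys] .
  thus ?thesis using finite_extension_subring_incl[OF FS, of K "t # ys"] KL LF tL by auto
qed

lemma zariski_lemma:
  assumes "subfield K R" "infinite K" "set xs \<subseteq> carrier R" "carrier R \<subseteq> finite_extension K xs"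
  shows "finite_dimension K (carrier R)"
  using assms
proof (induction xs arbitrary: K)
  case Nil
  have "carrier R = K" using Nil subfieldE(3)[OF Nil(1)] by auto
  thus ?case using dimension_one[OF Nil(1)] unfolding finite_dimension_def by auto
next
  case (Cons t ys)
  have K: "subfield K R" and t: "t \<in> carrier R" and ys: "set ys \<subseteq> carrier R"
    using Cons by auto
  have KC: "K \<subseteq> carrier R" using subfieldE(3)[OF K] .
  show ?case
  proof (cases "(algebraic over K) t")
    case True
    define L where "L = simple_extension K t"
    have L: "subfield L R" unfolding L_def using simple_extension_is_subfield[OF K t] True by auto
    have KL: "K \<subseteq> L" unfolding L_def using simple_extension_incl[OF KC t] .
    have tL: "t \<in> L" unfolding L_def using simple_extension_mem[OF subfieldE(1)[OF K] t] .
    have "infinite L" using Cons(3) KL finite_subset by blast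
    moreover have "carrier R \<subseteq> finite_extension L ys" using finite_extension_Cons_subset[OF L KL tL ys] Cons(5) by auto
    ultimately have fL: "finite_dimension L (carrier R)" using Cons.IH[OF L] ys by auto
    have fKL: "finite_dimension K L" unfolding L_def
      using finite_dimension_simple_extension[OF K t] True by auto
    show ?thesis using telescopic_base_dim(1)[OF K L fKL fL] .
  next
    case False
    define L where "L = generate_field R (insert t K)"
    have HC: "insert t K \<subseteq> carrier R" using KC t by auto
    have L: "subfield L R" unfolding L_def using generate_field_is_subfield[OF HC] .
    have KL: "K \<subseteq> L" unfolding L_def using generate_field.incl[of _ "insert t K" R] by auto
    have tL: "t \<in> L" unfolding L_def using generate_field.incl[of t "insert t K" R] by auto
    have "infinite L" using Cons(3) KL finite_subset by blast
    moreover have "carrier R \<subseteq> finite_extension L ys" using finite_extension_Cons_subset[OF L KL tL ys] Cons(5) by auto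
    ultimately have fL: "finite_dimension L (carrier R)" using Cons.IH[OF L] ys by auto
    have "(transcendental over K) t" using False unfolding over_def by auto
    hence False using transcendental_generator_contradiction[OF K Cons(3) t _ ys Cons(5)] fL unfolding L_def by auto
    thus ?thesis ..
  qed
qed

lemma root_factor:
  assumes K: "subfield K R" and p: "p \<in> carrier (K[X])" "p \<noteq> []" and c: "c \<in> K" "eval p c = \<zero>"
  obtains q where "q \<in> carrier (K[X])" "q \<noteq> []" "degree q < degree p"
    "\<And>x. x \<in> carrier R \<Longrightarrow> eval p x = (x \<ominus> c) \<otimes> eval q x"
proof -
  have KS: "subring K R" and KC: "K \<subseteq> carrier R" using subfieldE(1,3)[OF K] .
  interpret UP: domain "K[X]" using univ_poly_is_domain[OF KS] .
  have cc: "c \<in> carrier R" using c KC by auto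
  have pK: "polynomial K p" using p(1) univ_poly_carrier by blast
  define b where "b = [\<one>, \<ominus> c]"
  have bK: "polynomial K b" unfolding b_def polynomial_def using subringE(3,5)[OF KS] c by auto
  have bC: "b \<in> carrier (K[X])" using bK univ_poly_carrier by blast
  have "lead_coeff b \<in> Units (R \<lparr> carrier := K \<rparr>)"
    unfolding b_def Units_def using subringE(3)[OF KS] by (auto intro!: bexI[of _ \<one>])
  then obtain q r where qr: "polynomial K q" "polynomial K r"
      "p = (b \<otimes>\<^bsub>K[X]\<^esub> q) \<oplus>\<^bsub>K[X]\<^esub> r" "r = [] \<or> degree r < degree b"
    using long_division_theorem[OF KS pK bK] unfolding b_def by auto
  have qC: "q \<in> carrier (K[X])" and rC: "r \<in> carrier (K[X])" using qr univ_poly_carrier by blast+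
  have ev: "eval p x = eval b x \<otimes> eval q x \<oplus> eval r x" if "x \<in> carrier R" for x
    using qr(3) ring_hom_add[OF eval_is_hom[OF KS that]] ring_hom_mult[OF eval_is_hom[OF KS that]] bC qC rC
    by simp
  have "eval r c = \<zero>"
    using ev[OF cc] c(2) ring_hom_closed[OF eval_is_hom[OF KS cc] qC] ring_hom_closed[OF eval_is_hom[OF KS cc] rC] cc
    unfolding b_def by (simp add: a_minus_def r_neg)
  have r0: "r = []"
  proof (rule ccontr)
    assume "r \<noteq> []"
    then obtain a where "r = [a]" using qr(4) unfolding b_def by (cases r) auto
    then show False using qr(2) KC \<open>eval r c = \<zero>\<close> cc unfolding polynomial_def by auto
  qed
  have pbq: "p = b \<otimes>\<^bsub>K[X]\<^esub> q"
    using qr(3) r0 UP.r_zero[OF UP.m_closed[OF bC qC]] unfolding univ_poly_zero by simp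
  have q0: "q \<noteq> []" using pbq p(2) UP.r_null[OF bC] unfolding univ_poly_zero by auto
  have "degree p = degree b + degree q"
    using pbq poly_mult_degree_eq[OF KS bK qr(1)] q0 unfolding b_def by (simp add: univ_poly_mult)
  then have "degree q < degree p" unfolding b_def by simp
  moreover have "eval p x = (x \<ominus> c) \<otimes> eval q x" if "x \<in> carrier R" for x
    using ev[OF that] r0 ring_hom_closed[OF eval_is_hom[OF KS that] qC] that cc unfolding b_def
    by (simp add: a_minus_def)
  ultimately show ?thesis using that qC q0 by blast
qed

lemma algebraic_mem_algebraically_closed:
  assumes K: "subfield K R" "algebraically_closed K"
    and x: "x \<in> carrier R" and alg: "(algebraic over K) x"
  shows "x \<in> K"
proof -
  have KS: "subring K R" and KC: "K \<subseteq> carrier R" using subfieldE(1,3)[OF K(1)] .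
  have "x \<in> K" if "p \<in> carrier (K[X])" "p \<noteq> []" "eval p x = \<zero>" for p
    using that
  proof (induction "degree p" arbitrary: p rule: less_induct)
    case less
    show ?case
    proof (cases "degree p = 0")
      case True
      then obtain a where a: "p = [a]" using less(3) by (cases p) auto
      have "polynomial K p" using less(2) univ_poly_carrier by blast
      then have "a \<in> K - {\<zero>}" using a unfolding polynomial_def by auto
      then have "eval p x \<noteq> \<zero>" using a KC x by auto
      then show ?thesis using less(4) by blast
    next
      case False
      then obtain c where c: "c \<in> K" "eval p c = \<zero>" using K(2) less(2) unfolding algebraically_closed_def by blast
      obtain q where q: "q \<in> carrier (K[X])" "q \<noteq> []" "degree q < degree p"
        and pq: "eval p x = (x \<ominus> c) \<otimes> eval q x"
        using root_factor[OF K(1) less(2,3) c] x by metis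
      have "x \<ominus> c = \<zero> \<or> eval q x = \<zero>"
        using pq less(4) integral x c KC ring_hom_closed[OF eval_is_hom[OF KS x] q(1)] by auto
      then show ?thesis
      proof
        assume "x \<ominus> c = \<zero>"
        then show ?thesis using x c KC by (metis r_right_minus_eq subsetD)
      qed (use less(1) q in blast)
    qed
  qed
  then show ?thesis using algebraicE[OF KS x alg] by blast
qed

lemma algebraically_closed_finite_extension:
  assumes K: "subfield K R" "infinite K" "algebraically_closed K"
    and xs: "set xs \<subseteq> carrier R" "carrier R \<subseteq> finite_extension K xs"
  shows "carrier R = K"
proof -
  have "finite_dimension K (carrier R)" using zariski_lemma[OF K(1,2) xs] .
  then have "(algebraic over K) x" if "x \<in> carrier R" for x
    using finite_dimension_imp_algebraic[OF K(1) carrier_is_subring] that by blast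
  then show ?thesis using algebraic_mem_algebraically_closed[OF K(1,3)] subfieldE(3)[OF K(1)] by blast
qed

end

fun list_eval :: "'k::comm_ring_1 list \<Rightarrow> 'k \<Rightarrow> 'k" where
  "list_eval [] x = 0"
| "list_eval (a # l) x = a * x ^ length l + list_eval l x"

lemma list_eval_sum: "list_eval cs x = (\<Sum>i<length cs. rev cs ! i * x ^ i)"
proof (induction cs)
  case Nil
  then show ?case by simp
next
  case (Cons a l)
  have "(\<Sum>i<length (a # l). rev (a # l) ! i * x ^ i)
      = (\<Sum>i<length l. rev (a # l) ! i * x ^ i) + rev (a # l) ! length l * x ^ length l"
    by simp
  also have "(\<Sum>i<length l. rev (a # l) ! i * x ^ i) = (\<Sum>i<length l. rev l ! i * x ^ i)"
    by (rule sum.cong) (auto simp: nth_append)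
  also have "rev (a # l) ! length l = a" by (simp add: nth_append)
  finally show ?case using Cons by simp
qed

lemma alg_closed_field_infinite: "infinite (UNIV :: 'k::alg_closed_field set)"
proof
  assume fin: "finite (UNIV :: 'k set)"
  define Q :: "'k poly" where "Q = (\<Prod>a\<in>UNIV. [:-a, 1:])"
  define P :: "'k poly" where "P = Q + 1"
  have dQ: "Polynomial.degree Q = card (UNIV :: 'k set)"
    unfolding Q_def by (subst degree_prod_eq_sum_degree) auto
  have "card (UNIV :: 'k set) > 0" using fin by (simp add: card_gt_0_iff)
  hence "Polynomial.degree P > 0" unfolding P_def using dQ
    by (subst degree_add_eq_left) auto
  then obtain x where x: "poly P x = 0" using alg_closed_imp_poly_has_root by blast
  have "poly Q x = 0" unfolding Q_def poly_prod using fin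
    by (rule prod_zero) (auto intro!: bexI[of _ x])
  thus False using x unfolding P_def by simp
qed

context field
begin

lemma range_hom_algebraically_closed:
  fixes \<psi> :: "'k::alg_closed_field \<Rightarrow> 'a"
  assumes hadd: "\<And>a b. \<psi> (a + b) = \<psi> a \<oplus> \<psi> b" and hmul: "\<And>a b. \<psi> (a * b) = \<psi> a \<otimes> \<psi> b"
    and h0: "\<psi> 0 = \<zero>" and h1: "\<psi> 1 = \<one>" and hC: "\<And>a. \<psi> a \<in> carrier R"
  shows "algebraically_closed (range \<psi>)"
  unfolding algebraically_closed_def
proof (intro ballI impI)
  fix p assume p: "p \<in> carrier ((range \<psi>)[X])" and d: "degree p > 0"
  have pol: "polynomial (range \<psi>) p" using p univ_poly_carrier by blast
  then have "\<forall>z\<in>set p. \<exists>c. z = \<psi> c" unfolding polynomial_def by auto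
  then obtain cs where peq: "p = map \<psi> cs" using ex_map_conv[of p \<psi>] by blast
  have hpow: "\<psi> (x ^ n) = \<psi> x [^] n" for x n
    by (induction n) (auto simp: h1 hmul m_comm hC)
  have hev: "eval (map \<psi> l) (\<psi> x) = \<psi> (list_eval l x)" for l x
    by (induction l) (auto simp: h0 hadd hmul hpow)
  have ne: "cs \<noteq> []" using d peq by auto
  have "lead_coeff p \<noteq> \<zero>" using pol ne peq unfolding polynomial_def by auto
  then have "hd cs \<noteq> 0" using peq ne h0 by (cases cs) auto
  moreover have "rev cs ! (length cs - 1) = hd cs" using ne by (simp add: rev_nth hd_conv_nth)
  moreover have "length cs - 1 > 0" using d peq by simp
  ultimately obtain x where "(\<Sum>k\<le>length cs - 1. rev cs ! k * x ^ k) = 0"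
    using alg_closed[of "length cs - 1" "\<lambda>k. rev cs ! k"] by auto
  moreover have "{..length cs - 1} = {..<length cs}" using ne by (cases cs) auto
  ultimately have "list_eval cs x = 0" by (simp add: list_eval_sum)
  then have "eval p (\<psi> x) = \<zero>" using hev peq h0 by simp
  then show "\<exists>c\<in>range \<psi>. eval p c = \<zero>" by blast
qed

end

section \<open>Weak Nullstellensatz\<close>

lemma class_rcos_eq_iff:
  fixes I :: "'r::comm_ring_1 set"
  assumes I: "ideal I cring_class_ops"
  shows "I +>\<^bsub>cring_class_ops\<^esub> a = I +>\<^bsub>cring_class_ops\<^esub> b \<longleftrightarrow> a - b \<in> I"
proof -
  interpret I: ideal I "cring_class_ops :: 'r ring" by (rule I)
  have "a \<in> I +>\<^bsub>cring_class_ops\<^esub> b \<longleftrightarrow> a - b \<in> I"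
    using I.a_rcos_module_minus[OF cring_class.ring_axioms] by (simp add: class_simps)
  moreover have "a \<in> I +>\<^bsub>cring_class_ops\<^esub> a" using I.a_rcos_self by (simp add: class_simps)
  ultimately show ?thesis using I.a_repr_independence' by (metis carrier_class)
qed

context field
begin

lemma range_hom_subfield:
  fixes \<psi> :: "'k::field \<Rightarrow> 'a"
  assumes hadd: "\<And>a b. \<psi> (a + b) = \<psi> a \<oplus> \<psi> b" and hmul: "\<And>a b. \<psi> (a * b) = \<psi> a \<otimes> \<psi> b"
    and h0: "\<psi> 0 = \<zero>" and h1: "\<psi> 1 = \<one>" and hC: "\<And>a. \<psi> a \<in> carrier R"
  shows "subfield (range \<psi>) R"
proof (rule subfieldI')
  have hneg: "\<psi> (- a) = \<ominus> \<psi> a" for a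
    using hadd[of "- a" a] h0 hC by (metis add.left_inverse minus_equality)
  show "subring (range \<psi>) R"
  proof (rule subringI)
    show "\<one> \<in> range \<psi>" using h1 by (metis rangeI)
    show "\<ominus> h \<in> range \<psi>" if h: "h \<in> range \<psi>" for h
    proof -
      obtain a where "h = \<psi> a" using h by blast
      then have "\<ominus> h = \<psi> (- a)" using hneg by simp
      then show ?thesis by simp
    qed
  qed (auto simp: hC simp flip: hadd hmul)
next
  fix k assume "k \<in> range \<psi> - {\<zero>}"
  then obtain c where c: "k = \<psi> c" "c \<noteq> 0" using h0 by auto
  then have "\<psi> c \<otimes> \<psi> (inverse c) = \<one>" by (simp flip: hmul h1)
  then have "inv k = \<psi> (inverse c)" using comm_inv_char hC c(1) by simp
  then show "inv k \<in> range \<psi>" by simp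
qed

end

context domain
begin

lemma fin_gen_algebra_image_finite_extension:
  fixes \<phi> :: "'k \<Rightarrow> 'r::comm_ring_1" and \<pi> :: "'r \<Rightarrow> 'a"
  assumes fg: "fin_gen_algebra \<phi>" and K: "subring K R" and \<phi>K: "\<And>c. \<pi> (\<phi> c) \<in> K"
    and \<pi>: "\<And>a b. \<pi> (a + b) = \<pi> a \<oplus> \<pi> b" "\<And>a b. \<pi> (a * b) = \<pi> a \<otimes> \<pi> b" "\<And>a. \<pi> a \<in> carrier R"
  shows "\<exists>xs. set xs \<subseteq> carrier R \<and> range \<pi> \<subseteq> finite_extension K xs"
proof -
  obtain S where S: "finite S" "subalg_gen \<phi> S = UNIV" using fg unfolding fin_gen_algebra_def by blast
  obtain xs where xs: "set xs = \<pi> ` S" using finite_list[OF finite_imageI[OF S(1), of \<pi>]] by blast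
  have xsC: "set xs \<subseteq> carrier R" unfolding xs using \<pi>(3) by blast
  have KC: "K \<subseteq> carrier R" using subringE(1)[OF K] .
  have FE: "subring (finite_extension K xs) R" using finite_extension_is_subring[OF K xsC] .
  have "\<pi> r \<in> finite_extension K xs" if "r \<in> subalg_gen \<phi> S" for r
    using that
  proof (induction rule: subalg_gen.induct)
    case (const c)
    then show ?case using finite_extension_incl[OF KC xsC] \<phi>K by blast
  next
    case (gen s)
    then show ?case using finite_extension_mem[OF K xsC] xs by blast
  qed (use \<pi> subringE(6,7)[OF FE] in simp_all)
  then show ?thesis using xsC S(2) by blast
qed

end

lemma weak_nullstellensatz:
  fixes \<phi> :: "'k::alg_closed_field \<Rightarrow> 'r::comm_ring_1"
  assumes \<phi>: "alg_map \<phi>" and fg: "fin_gen_algebra \<phi>" and m: "maximalideal m cring_class_ops"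
  shows "\<exists>c. t - \<phi> c \<in> m"
proof -
  define F where "F = cring_class_ops Quot m"
  interpret F: field F unfolding F_def by (rule maximalideal.quotient_is_field[OF m cring_class])
  have mI: "ideal m cring_class_ops" using maximalideal.axioms(1)[OF m] .
  define \<pi> where "\<pi> = (\<lambda>x. m +>\<^bsub>cring_class_ops\<^esub> x)"
  have hom: "\<pi> \<in> ring_hom cring_class_ops F" unfolding \<pi>_def F_def by (rule ideal.rcos_ring_hom[OF mI])
  have \<pi>: "\<pi> (a + b) = \<pi> a \<oplus>\<^bsub>F\<^esub> \<pi> b" "\<pi> (a * b) = \<pi> a \<otimes>\<^bsub>F\<^esub> \<pi> b" "\<pi> a \<in> carrier F" for a b
    using ring_hom_add[OF hom] ring_hom_mult[OF hom] ring_hom_closed[OF hom] by (simp_all add: class_simps)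
  have \<pi>_eq: "\<pi> a = \<pi> b \<longleftrightarrow> a - b \<in> m" for a b unfolding \<pi>_def by (rule class_rcos_eq_iff[OF mI])
  define \<psi> where "\<psi> = (\<lambda>c. \<pi> (\<phi> c))"
  have \<psi>: "\<psi> (a + b) = \<psi> a \<oplus>\<^bsub>F\<^esub> \<psi> b" "\<psi> (a * b) = \<psi> a \<otimes>\<^bsub>F\<^esub> \<psi> b" "\<psi> a \<in> carrier F"
    "\<psi> 0 = \<zero>\<^bsub>F\<^esub>" "\<psi> 1 = \<one>\<^bsub>F\<^esub>" for a b
    unfolding \<psi>_def using \<pi> ring_hom_zero[OF hom] ring_hom_one[OF hom] \<phi> cring_class.ring_axioms F.ring_axioms
    by (simp_all add: alg_map_simps class_simps)
  have "inj \<psi>" using alg_map_eq_mod_maximalideal[OF \<phi> m] \<pi>_eq unfolding \<psi>_def by (intro injI) blast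
  then have K0: "subfield (range \<psi>) F" "infinite (range \<psi>)" "F.algebraically_closed (range \<psi>)"
    using F.range_hom_subfield[OF \<psi>(1,2,4,5,3)] F.range_hom_algebraically_closed[OF \<psi>(1,2,4,5,3)]
      alg_closed_field_infinite finite_imageD by blast+
  have \<phi>K: "\<pi> (\<phi> c) \<in> range \<psi>" for c unfolding \<psi>_def by (rule rangeI)
  obtain xs where xs: "set xs \<subseteq> carrier F" "range \<pi> \<subseteq> F.finite_extension (range \<psi>) xs"
    using F.fin_gen_algebra_image_finite_extension[where \<pi> = \<pi>, OF fg subfieldE(1)[OF K0(1)] \<phi>K \<pi>] by blast
  moreover have "carrier F = range \<pi>"
    unfolding F_def \<pi>_def FactRing_def A_RCOSETS_def' by (auto simp: class_simps)
  ultimately have "carrier F = range \<psi>" using F.algebraically_closed_finite_extension[OF K0] by simp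
  then have "\<pi> t \<in> range \<psi>" using \<pi>(3) by blast
  then show ?thesis using \<pi>_eq unfolding \<psi>_def by blast
qed

section \<open>Spectral mapping theorem\<close>

lemma maximalideal_rational_point:
  fixes \<phi> :: "'k::alg_closed_field \<Rightarrow> 'r::comm_ring_1"
  assumes "alg_map \<phi>" "fin_gen_algebra \<phi>" "maximalideal m cring_class_ops"
  obtains a where "length a = length x" "\<And>i. i < length x \<Longrightarrow> x ! i - \<phi> (a ! i) \<in> m"
proof -
  obtain f where "\<forall>i. x ! i - \<phi> (f i) \<in> m"
    using choice[OF allI[OF weak_nullstellensatz[OF assms]]] by blast
  then show ?thesis using that[of "map f [0..<length x]"] by simp
qed

lemma mpoly_eval_map_diff_in_ideal:
  fixes \<phi> :: "'k::field \<Rightarrow> 'r::comm_ring_1"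
  assumes \<phi>: "alg_map \<phi>" and I: "ideal I cring_class_ops"
    and vars: "\<forall>p\<in>set q. mpoly_vars p \<subseteq> {..<length x}"
    and xa: "\<And>i. i < length x \<Longrightarrow> x ! i - \<phi> (a ! i) \<in> I" and j: "j < length q"
  shows "map (mpoly_eval \<phi> x) q ! j - \<phi> (map (mpoly_eval (\<lambda>c. c) a) q ! j) \<in> I"
  using mpoly_eval_diff_in_ideal[OF \<phi> I _ xa] vars j by simp

lemma taylor_spectrum_mpoly_subset:
  fixes \<phi> :: "'k::alg_closed_field \<Rightarrow> 'r::comm_ring_1"
  assumes \<phi>: "alg_map \<phi>" "fin_gen_algebra \<phi>" and M: "module smul"
    and fg: "finite F" "module.span smul F = UNIV" and vars: "\<forall>p\<in>set q. mpoly_vars p \<subseteq> {..<length x}"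
  shows "taylor_spectrum \<phi> smul (map (mpoly_eval \<phi> x) q) \<subseteq>
    (\<lambda>a. map (mpoly_eval (\<lambda>c. c) a) q) ` taylor_spectrum \<phi> smul x"
proof
  note spectrum = taylor_spectrum_iff_maximalideal[OF M fg]
  let ?qx = "map (mpoly_eval \<phi> x) q" and ?q = "\<lambda>a. map (mpoly_eval (\<lambda>c. c) a) q"
  fix b assume "b \<in> taylor_spectrum \<phi> smul ?qx"
  then obtain m where b: "length b = length q" and m: "maximalideal m cring_class_ops"
    and bm: "\<And>j. j < length q \<Longrightarrow> ?qx ! j - \<phi> (b ! j) \<in> m" and mM: "module.ideal_smul smul m \<noteq> UNIV"
    unfolding spectrum by auto
  have mI: "ideal m cring_class_ops" using maximalideal.axioms(1)[OF m] .
  obtain a where a: "length a = length x" "\<And>i. i < length x \<Longrightarrow> x ! i - \<phi> (a ! i) \<in> m"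
    using maximalideal_rational_point[OF \<phi> m] by blast
  have "b ! j = ?q a ! j" if j: "j < length q" for j
  proof (rule alg_map_eq_mod_maximalideal[OF \<phi>(1) m])
    have "(?qx ! j - \<phi> (?q a ! j)) - (?qx ! j - \<phi> (b ! j)) \<in> m"
      using class_ideal_diff[OF mI mpoly_eval_map_diff_in_ideal[OF \<phi>(1) mI vars a(2) j] bm[OF j]] .
    then show "\<phi> (b ! j) - \<phi> (?q a ! j) \<in> m" by simp
  qed
  then have "b = ?q a" using b by (simp add: nth_equalityI)
  moreover have "a \<in> taylor_spectrum \<phi> smul x" unfolding spectrum using a m mM by blast
  ultimately show "b \<in> ?q ` taylor_spectrum \<phi> smul x" by blast
qed

lemma mpoly_image_subset_taylor_spectrum:
  fixes \<phi> :: "'k::field \<Rightarrow> 'r::comm_ring_1"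
  assumes \<phi>: "alg_map \<phi>" and M: "module smul"
    and fg: "finite F" "module.span smul F = UNIV" and vars: "\<forall>p\<in>set q. mpoly_vars p \<subseteq> {..<length x}"
  shows "(\<lambda>a. map (mpoly_eval (\<lambda>c. c) a) q) ` taylor_spectrum \<phi> smul x \<subseteq>
    taylor_spectrum \<phi> smul (map (mpoly_eval \<phi> x) q)"
proof
  note spectrum = taylor_spectrum_iff_maximalideal[OF M fg]
  fix b assume "b \<in> (\<lambda>a. map (mpoly_eval (\<lambda>c. c) a) q) ` taylor_spectrum \<phi> smul x"
  then obtain a where b: "b = map (mpoly_eval (\<lambda>c. c) a) q" and "a \<in> taylor_spectrum \<phi> smul x" by blast
  then obtain m where m: "maximalideal m cring_class_ops" "module.ideal_smul smul m \<noteq> UNIV"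
    and xa: "\<And>i. i < length x \<Longrightarrow> x ! i - \<phi> (a ! i) \<in> m"
    unfolding spectrum by blast
  then show "b \<in> taylor_spectrum \<phi> smul (map (mpoly_eval \<phi> x) q)"
    unfolding spectrum b using mpoly_eval_map_diff_in_ideal[OF \<phi> maximalideal.axioms(1)[OF m(1)] vars xa]
    by auto
qed

theorem theorem2p13:
  fixes \<phi> :: "'k::alg_closed_field \<Rightarrow> 'r::comm_ring_1"
    and smul :: "'r \<Rightarrow> 'm::ab_group_add \<Rightarrow> 'm"
    and x :: "'r list"
    and q :: "'k mpoly list"
  assumes "alg_map \<phi>"
    and "fin_gen_algebra \<phi>"
    and "module smul"
    and "noetherian_module smul"
    and "\<forall>p\<in>set q. mpoly_vars p \<subseteq> {..<length x}"
  shows "taylor_spectrum \<phi> smul (map (mpoly_eval \<phi> x) q) =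
         (\<lambda>a. map (mpoly_eval (\<lambda>c. c) a) q) ` taylor_spectrum \<phi> smul x"
proof -
  obtain F where F: "finite F" "module.span smul F = UNIV"
    using assms(4) module.subspace_UNIV[OF assms(3)] unfolding noetherian_module_def by blast
  show ?thesis
    using taylor_spectrum_mpoly_subset[OF assms(1-3) F assms(5)]
      mpoly_image_subset_taylor_spectrum[OF assms(1,3) F assms(5)] by (rule equalityI)
qed

end
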